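(* Let $\tau$ be a generic Euclidean triangle, with triangle group $G_\tau=\langle r_1,r_2,r_3\rangle$ (see context). Then $G_\tau$ admits the presentation $$\langle x_1,x_2,x_3 \mid x_1^2,\ x_2^2,\ x_3^2,\ [\,w,\ g_{n,m}^{-1}\,w\,g_{n,m}\,]\ \text{ for } n,m\in\mathbb{Z},\ (n,m)\neq(0,0)\rangle,$$ where $w=(x_1x_2x_3)^2$ and $g_{n,m}=(x_1x_2)^n(x_1x_3)^m$, with the generator $x_i$ corresponding to $r_i$ for $i=1,2,3$.
   Context: A Euclidean triangle $\tau=A_1A_2A_3$ has edges $e_i=A_jA_k$ of length $\ell_i>0$, $\{i,j,k\}=\{1,2,3\}$. It is generic if for some real $k>0$ the numbers $k\ell_1,k\ell_2,k\ell_3$ are algebraically independent over $\mathbb{Q}$. Let $r_i$ be the reflection of the plane across the line containing $e_i$ and $G_\tau=\langle r_1,r_2,r_3\rangle\subset \mathrm{E}(2)$. Isometries act on the right and products are composed left to right: $(x)gh=((x)g)h$. Commutators are $[a,b]=aba^{-1}b^{-1}$. *)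

theory Defs
  imports Complex_Main
begin

text \<open>The Euclidean plane is modelled as the complex numbers. Isometries act on the
right and are composed left to right: the product g h means first g, then h,
i.e. the function h \<circ> g.\<close>

definition refl_line :: "complex \<Rightarrow> complex \<Rightarrow> complex \<Rightarrow> complex" where
  "refl_line a b z = a + ((b - a) / cnj (b - a)) * cnj (z - a)"

definition nondegenerate_triangle :: "complex \<Rightarrow> complex \<Rightarrow> complex \<Rightarrow> bool" where
  "nondegenerate_triangle A1 A2 A3 \<longleftrightarrow> Im ((A2 - A1) * cnj (A3 - A1)) \<noteq> 0"

definition alg_indep3 :: "real \<Rightarrow> real \<Rightarrow> real \<Rightarrow> bool" where
  "alg_indep3 a b c \<longleftrightarrow>
     (\<forall>(S :: (nat \<times> nat \<times> nat) set) (co :: nat \<times> nat \<times> nat \<Rightarrow> rat).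
        finite S \<longrightarrow>
        (\<Sum>(i, j, k)\<in>S. of_rat (co (i, j, k)) * a ^ i * b ^ j * c ^ k) = 0 \<longrightarrow>
        (\<forall>e\<in>S. co e = 0))"

text \<open>Triangle A1 A2 A3, edge e_i = A_j A_k of length l_i.\<close>

definition generic_triangle :: "complex \<Rightarrow> complex \<Rightarrow> complex \<Rightarrow> bool" where
  "generic_triangle A1 A2 A3 \<longleftrightarrow>
     (\<exists>k::real. k > 0 \<and> alg_indep3 (k * cmod (A2 - A3)) (k * cmod (A3 - A1)) (k * cmod (A1 - A2)))"

definition tri_refl :: "complex \<Rightarrow> complex \<Rightarrow> complex \<Rightarrow> nat \<Rightarrow> complex \<Rightarrow> complex" where
  "tri_refl A1 A2 A3 i =
     (if i = 1 then refl_line A2 A3 else if i = 2 then refl_line A3 A1 else refl_line A1 A2)"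

text \<open>A letter (i, False) stands for x_i, (i, True) for x_i^{-1}.\<close>

type_synonym letter = "nat \<times> bool"

definition inv_letter :: "letter \<Rightarrow> letter" where
  "inv_letter l = (fst l, \<not> snd l)"

definition inv_word :: "letter list \<Rightarrow> letter list" where
  "inv_word w = rev (map inv_letter w)"

definition pow_word :: "letter list \<Rightarrow> int \<Rightarrow> letter list" where
  "pow_word w n = (if n \<ge> 0 then concat (replicate (nat n) w)
                   else concat (replicate (nat (- n)) (inv_word w)))"

definition comm_word :: "letter list \<Rightarrow> letter list \<Rightarrow> letter list" where
  "comm_word a b = a @ b @ inv_word a @ inv_word b"

text \<open>One elementary step of the equivalence defining the presented group:
insertion of a cancelling pair or of a relator (the reflexive, symmetric,
transitive closure then identifies a word with the identity iff it lies in the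
normal closure of the relators in the free group).\<close>

inductive word_step :: "letter list set \<Rightarrow> letter list \<Rightarrow> letter list \<Rightarrow> bool"
  for R where
  cancel: "word_step R (u @ v) (u @ [a, inv_letter a] @ v)"
| relator: "r \<in> R \<Longrightarrow> word_step R (u @ v) (u @ r @ v)"

definition word_equiv :: "letter list set \<Rightarrow> letter list \<Rightarrow> letter list \<Rightarrow> bool" where
  "word_equiv R = (sup (word_step R) (word_step R)\<inverse>\<inverse>)\<^sup>*\<^sup>*"

text \<open>Evaluation of a word in a group of bijections with right action:
the word [l1, ..., ln] is the product l1 ... ln, i.e. apply l1 first.\<close>

fun eval_word :: "(nat \<Rightarrow> 'a \<Rightarrow> 'a) \<Rightarrow> letter list \<Rightarrow> 'a \<Rightarrow> 'a" where
  "eval_word gen [] = id"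
| "eval_word gen (l # ls) =
     eval_word gen ls \<circ> (if snd l then inv (gen (fst l)) else gen (fst l))"

text \<open>The group generated by gen i (i \<in> I) has presentation \<langle>x_i, i\<in>I | R\<rangle> with
x_i \<mapsto> gen i: every word in the generators evaluates to the identity
exactly when it is trivial in the presented group (kernel of the evaluation
map from the free group = normal closure of R).\<close>

definition presentation :: "nat set \<Rightarrow> (nat \<Rightarrow> 'a \<Rightarrow> 'a) \<Rightarrow> letter list set \<Rightarrow> bool" where
  "presentation I gen R \<longleftrightarrow>
     (\<forall>w. set (map fst w) \<subseteq> I \<longrightarrow> (eval_word gen w = id \<longleftrightarrow> word_equiv R w []))"

definition xw :: "nat \<Rightarrow> letter list" where
  "xw i = [(i, False)]"

definition w_word :: "letter list" where
  "w_word = pow_word (xw 1 @ xw 2 @ xw 3) 2"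

definition g_word :: "int \<Rightarrow> int \<Rightarrow> letter list" where
  "g_word n m = pow_word (xw 1 @ xw 2) n @ pow_word (xw 1 @ xw 3) m"

definition tri_relators :: "letter list set" where
  "tri_relators =
     {xw 1 @ xw 1, xw 2 @ xw 2, xw 3 @ xw 3} \<union>
     {comm_word w_word (inv_word (g_word n m) @ w_word @ g_word n m) | n m. (n, m) \<noteq> (0, 0)}"

end

theory Submission
  imports Defs
begin

text \<open>The reflections satisfy the relators: w = (r1 r2 r3)^2 is the square of a glide
reflection, hence a translation, so all conjugates of w are translations and commute.

Conversely, in the presented group x1 x2 and x1 x3 commute up to products of the conjugates
t_{n,m} = g_{n,m}^-1 w g_{n,m}, which commute pairwise by the relators; so every element is
x1^s (x1 x2)^n (x1 x3)^m times a product of t_{n,m}'s. In the triangle group x1 x2 and x1 x3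
act as rotations with unit factors lam12, lam13 and t_{n,m} as the translation by
lam12^n lam13^m t0. An element acting trivially therefore has s = 0, lam12^n lam13^m = 1
and a vanishing Laurent polynomial in lam12, lam13 whose coefficients are the exponent sums
of the t_{n,m}. For a generic triangle lam12 and lam13 satisfy no Laurent relation: they are
rational in the side lengths and twice the area, so a relation at algebraically independent
side lengths holds for every triangle, and the triangles 0, 1, w show that it is trivial.
Hence n = m = 0 and all exponent sums vanish, so the translations cancel.\<close>

definition monomial3 :: "nat \<times> nat \<times> nat \<Rightarrow> real \<Rightarrow> real \<Rightarrow> real \<Rightarrow> real" where
  "monomial3 e x y z = x ^ fst e * y ^ fst (snd e) * z ^ snd (snd e)"

definition rat_poly3 :: "(real \<Rightarrow> real \<Rightarrow> real \<Rightarrow> real) \<Rightarrow> bool" where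
  "rat_poly3 F \<longleftrightarrow>
     (\<exists>S co. finite S \<and> (\<forall>x y z. F x y z = (\<Sum>e\<in>S. of_rat (co e) * monomial3 e x y z)))"

lemma alg_indep3_rat_poly3_zero:
  assumes indep: "alg_indep3 a b c" and F: "rat_poly3 F" and zero: "F a b c = 0"
  shows "F x y z = 0"
proof -
  obtain S co where S: "finite S"
    and F_eq: "\<And>x y z. F x y z = (\<Sum>e\<in>S. of_rat (co e) * monomial3 e x y z)"
    using F unfolding rat_poly3_def by blast
  have "(\<Sum>e\<in>S. of_rat (co e) * monomial3 e x y z) =
        (\<Sum>(i, j, k)\<in>S. of_rat (co (i, j, k)) * x ^ i * y ^ j * z ^ k)" for x y z
    by (rule sum.cong) (auto simp: monomial3_def split: prod.splits)
  then have "(\<Sum>(i, j, k)\<in>S. of_rat (co (i, j, k)) * a ^ i * b ^ j * c ^ k) = 0"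
    using zero F_eq by metis
  then have "\<forall>e\<in>S. co e = 0"
    using indep S unfolding alg_indep3_def by blast
  then show ?thesis
    using F_eq by simp
qed

lemma rat_poly3_const: "rat_poly3 (\<lambda>x y z. of_rat q)"
  unfolding rat_poly3_def
  by (intro exI[of _ "{(0, 0, 0)}"] exI[of _ "\<lambda>_. q"]) (simp add: monomial3_def)

lemma rat_poly3_var1: "rat_poly3 (\<lambda>x y z. x)"
  unfolding rat_poly3_def
  by (intro exI[of _ "{(1, 0, 0)}"] exI[of _ "\<lambda>_. 1"]) (simp add: monomial3_def)

lemma rat_poly3_var2: "rat_poly3 (\<lambda>x y z. y)"
  unfolding rat_poly3_def
  by (intro exI[of _ "{(0, 1, 0)}"] exI[of _ "\<lambda>_. 1"]) (simp add: monomial3_def)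

lemma rat_poly3_var3: "rat_poly3 (\<lambda>x y z. z)"
  unfolding rat_poly3_def
  by (intro exI[of _ "{(0, 0, 1)}"] exI[of _ "\<lambda>_. 1"]) (simp add: monomial3_def)

lemma rat_poly3_add:
  assumes "rat_poly3 F" "rat_poly3 G"
  shows "rat_poly3 (\<lambda>x y z. F x y z + G x y z)"
proof -
  obtain S1 c1 where S1: "finite S1"
    and F: "\<And>x y z. F x y z = (\<Sum>e\<in>S1. of_rat (c1 e) * monomial3 e x y z)"
    using assms(1) unfolding rat_poly3_def by blast
  obtain S2 c2 where S2: "finite S2"
    and G: "\<And>x y z. G x y z = (\<Sum>e\<in>S2. of_rat (c2 e) * monomial3 e x y z)"
    using assms(2) unfolding rat_poly3_def by blast
  define c where "c e = (if e \<in> S1 then c1 e else 0) + (if e \<in> S2 then c2 e else 0)" for e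
  have extend: "(\<Sum>e\<in>S. f e) = (\<Sum>e\<in>S1 \<union> S2. if e \<in> S then f e else 0)"
    if "S \<subseteq> S1 \<union> S2" for S and f :: "nat \<times> nat \<times> nat \<Rightarrow> real"
    using that S1 S2 by (simp add: sum.If_cases Int_absorb1)
  have "F x y z + G x y z = (\<Sum>e\<in>S1 \<union> S2. of_rat (c e) * monomial3 e x y z)" for x y z
    unfolding F G extend[of S1, OF Un_upper1] extend[of S2, OF Un_upper2] sum.distrib[symmetric]
    by (rule sum.cong) (auto simp: c_def of_rat_add distrib_right)
  then show ?thesis
    unfolding rat_poly3_def using S1 S2 by blast
qed

lemma rat_poly3_mult:
  assumes "rat_poly3 F" "rat_poly3 G"
  shows "rat_poly3 (\<lambda>x y z. F x y z * G x y z)"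
proof -
  obtain S1 c1 where S1: "finite S1"
    and F: "\<And>x y z. F x y z = (\<Sum>e\<in>S1. of_rat (c1 e) * monomial3 e x y z)"
    using assms(1) unfolding rat_poly3_def by blast
  obtain S2 c2 where S2: "finite S2"
    and G: "\<And>x y z. G x y z = (\<Sum>e\<in>S2. of_rat (c2 e) * monomial3 e x y z)"
    using assms(2) unfolding rat_poly3_def by blast
  define add_exp :: "(nat \<times> nat \<times> nat) \<times> (nat \<times> nat \<times> nat) \<Rightarrow> nat \<times> nat \<times> nat" where
    "add_exp p = (fst (fst p) + fst (snd p), fst (snd (fst p)) + fst (snd (snd p)),
                  snd (snd (fst p)) + snd (snd (snd p)))" for p
  have monomial3_add_exp: "monomial3 (add_exp p) x y z = monomial3 (fst p) x y z * monomial3 (snd p) x y z"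
    for p x y z
    by (simp add: monomial3_def add_exp_def power_add)
  define c where "c e = (\<Sum>p\<in>{p \<in> S1 \<times> S2. add_exp p = e}. c1 (fst p) * c2 (snd p))" for e
  have fin: "finite (S1 \<times> S2)"
    using S1 S2 by simp
  have "F x y z * G x y z = (\<Sum>e\<in>add_exp ` (S1 \<times> S2). of_rat (c e) * monomial3 e x y z)" for x y z
  proof -
    have "F x y z * G x y z =
          (\<Sum>p\<in>S1 \<times> S2. of_rat (c1 (fst p) * c2 (snd p)) * monomial3 (add_exp p) x y z)"
      unfolding F G sum_product sum.cartesian_product
      by (rule sum.cong) (auto simp: monomial3_add_exp of_rat_mult)
    also have "\<dots> = (\<Sum>e\<in>add_exp ` (S1 \<times> S2). \<Sum>p\<in>{p \<in> S1 \<times> S2. add_exp p = e}.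
                       of_rat (c1 (fst p) * c2 (snd p)) * monomial3 (add_exp p) x y z)"
      by (rule sum.image_gen[OF fin])
    also have "\<dots> = (\<Sum>e\<in>add_exp ` (S1 \<times> S2). of_rat (c e) * monomial3 e x y z)"
      unfolding c_def of_rat_sum sum_distrib_right
      by (rule sum.cong[OF refl], rule sum.cong) auto
    finally show ?thesis .
  qed
  then show ?thesis
    unfolding rat_poly3_def using fin by blast
qed

lemma rat_poly3_cmult: "rat_poly3 F \<Longrightarrow> rat_poly3 (\<lambda>x y z. of_rat q * F x y z)"
  using rat_poly3_mult[OF rat_poly3_const] by blast

lemma rat_poly3_diff: "rat_poly3 F \<Longrightarrow> rat_poly3 G \<Longrightarrow> rat_poly3 (\<lambda>x y z. F x y z - G x y z)"
  using rat_poly3_add[OF _ rat_poly3_cmult[of G "-1"], of F] by simp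

lemma rat_poly3_divide2: "rat_poly3 F \<Longrightarrow> rat_poly3 (\<lambda>x y z. F x y z / 2)"
  using rat_poly3_cmult[of F "1/2"] by (simp add: of_rat_divide)

lemma rat_poly3_power: "rat_poly3 F \<Longrightarrow> rat_poly3 (\<lambda>x y z. F x y z ^ n)"
proof (induction n)
  case 0
  then show ?case
    using rat_poly3_const[of 1] by simp
next
  case (Suc n)
  then show ?case
    using rat_poly3_mult[OF Suc(2) Suc(1)[OF Suc(2)]] by simp
qed

section \<open>Laurent polynomials with integer coefficients\<close>

lemma finite_int_set_bounded: "finite (F :: int set) \<Longrightarrow> \<exists>K\<ge>0. \<forall>p\<in>F. - K \<le> p \<and> p \<le> K"
proof -
  assume "finite F"
  then have "\<forall>p\<in>F. \<bar>p\<bar> \<le> (\<Sum>q\<in>F. \<bar>q\<bar>)"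
    by (auto intro!: member_le_sum)
  then show ?thesis
    by (intro exI[of _ "\<Sum>q\<in>F. \<bar>q\<bar>"]) (auto simp: sum_nonneg abs_le_iff)
qed

lemma laurent_clear_denominator:
  fixes g :: "int \<Rightarrow> complex"
  assumes "0 \<le> K" and bound: "\<forall>p\<in>F. - K \<le> p \<and> p \<le> K" and "x \<noteq> 0"
  defines "c i \<equiv> if int i - K \<in> F then g (int i - K) else 0"
  shows "x ^ nat K * (\<Sum>p\<in>F. g p * x powi p) = (\<Sum>i\<le>nat (2 * K). c i * x ^ i)"
proof -
  define h where "h p = nat (p + K)" for p
  have inj: "inj_on h F"
  proof (rule inj_onI)
    fix p q assume "p \<in> F" "q \<in> F" "h p = h q"
    moreover from calculation have "p + K \<ge> 0" "q + K \<ge> 0"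
      using bound by auto
    ultimately show "p = q"
      by (simp add: h_def eq_nat_nat_iff)
  qed
  have h_image: "h ` F \<subseteq> {..nat (2 * K)}"
    using bound by (auto simp: h_def)
  have "x ^ nat K * (\<Sum>p\<in>F. g p * x powi p) = (\<Sum>p\<in>F. g p * x ^ h p)"
    unfolding sum_distrib_left
  proof (rule sum.cong[OF refl])
    fix p assume p: "p \<in> F"
    have "x ^ nat K = x powi K"
      using \<open>0 \<le> K\<close> by (simp add: power_int_def)
    then have "x ^ nat K * x powi p = x powi (K + p)"
      using \<open>x \<noteq> 0\<close> by (simp add: power_int_add)
    also have "\<dots> = x ^ h p"
      using p bound unfolding h_def power_int_def by (auto simp: add.commute)
    finally show "x ^ nat K * (g p * x powi p) = g p * x ^ h p"
      by (simp add: algebra_simps)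
  qed
  also have "\<dots> = (\<Sum>i\<in>h ` F. c i * x ^ i)"
    unfolding sum.reindex[OF inj] o_def
    by (rule sum.cong[OF refl]) (use bound in \<open>auto simp: c_def h_def\<close>)
  also have "\<dots> = (\<Sum>i\<le>nat (2 * K). c i * x ^ i)"
  proof (rule sum.mono_neutral_left[OF _ h_image])
    have "int i - K \<notin> F" if "i \<notin> h ` F" for i
      using that image_eqI[of i h "int i - K" F] by (auto simp: h_def)
    then show "\<forall>i\<in>{..nat (2 * K)} - h ` F. c i * x ^ i = 0"
      by (simp add: c_def)
  qed simp
  finally show ?thesis .
qed

lemma laurent_poly_eq_0_on_infinite:
  fixes g :: "int \<Rightarrow> complex"
  assumes F: "finite F" and Z: "infinite Z"
    and zero: "\<And>x. x \<in> Z \<Longrightarrow> x \<noteq> 0 \<and> (\<Sum>p\<in>F. g p * x powi p) = 0"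
  shows "\<forall>p\<in>F. g p = 0"
proof -
  obtain K where K: "K \<ge> 0" and bound: "\<forall>p\<in>F. - K \<le> p \<and> p \<le> K"
    using finite_int_set_bounded[OF F] by blast
  define c where "c i = (if int i - K \<in> F then g (int i - K) else 0)" for i :: nat
  have "Z \<subseteq> {x. (\<Sum>i\<le>nat (2 * K). c i * x ^ i) = 0}"
  proof
    fix x assume "x \<in> Z"
    then have "x \<noteq> 0" "(\<Sum>p\<in>F. g p * x powi p) = 0"
      using zero by auto
    then show "x \<in> {x. (\<Sum>i\<le>nat (2 * K). c i * x ^ i) = 0}"
      using laurent_clear_denominator[OF K bound, of x g] by (simp add: c_def)
  qed
  then have "infinite {x. (\<Sum>i\<le>nat (2 * K). c i * x ^ i) = 0}"
    using Z finite_subset by blast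
  then have c_zero: "\<forall>i\<le>nat (2 * K). c i = 0"
    using polyfun_finite_roots by blast
  show ?thesis
  proof
    fix p assume "p \<in> F"
    then have "c (nat (p + K)) = 0" and "int (nat (p + K)) - K = p"
      using c_zero bound by auto
    then show "g p = 0"
      using \<open>p \<in> F\<close> by (simp add: c_def)
  qed
qed

definition laurent_eval :: "(int \<times> int \<Rightarrow> int) \<Rightarrow> (int \<times> int) set \<Rightarrow> complex \<Rightarrow> complex \<Rightarrow> complex" where
  "laurent_eval f S u v = (\<Sum>e\<in>S. of_int (f e) * u powi fst e * v powi snd e)"

lemma laurent_eval_iterated:
  assumes S: "finite S"
  shows "laurent_eval f S u v =
    (\<Sum>p\<in>fst ` S. (\<Sum>q\<in>snd ` S. (if (p, q) \<in> S then of_int (f (p, q)) else 0) * v powi q) * u powi p)"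
proof -
  have sub: "S \<subseteq> fst ` S \<times> snd ` S"
    by force
  have fin: "finite (fst ` S \<times> snd ` S)"
    using S by simp
  have "laurent_eval f S u v = (\<Sum>e\<in>fst ` S \<times> snd ` S.
          (if e \<in> S then of_int (f e) else 0) * u powi fst e * v powi snd e)"
    unfolding laurent_eval_def by (rule sum.mono_neutral_cong_left[OF fin sub]) auto
  also have "\<dots> = (\<Sum>p\<in>fst ` S. \<Sum>q\<in>snd ` S.
          (if (p, q) \<in> S then of_int (f (p, q)) else 0) * u powi p * v powi q)"
    by (subst sum.cartesian_product) (rule sum.cong, auto simp: case_prod_beta)
  also have "\<dots> = (\<Sum>p\<in>fst ` S. (\<Sum>q\<in>snd ` S.
          (if (p, q) \<in> S then of_int (f (p, q)) else 0) * v powi q) * u powi p)"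
    unfolding sum_distrib_right by (intro sum.cong refl) (simp add: mult_ac)
  finally show ?thesis .
qed

lemma laurent_eval_eq_0_on_infinite:
  assumes S: "finite S" and V: "infinite Vs"
    and zero: "\<And>v. v \<in> Vs \<Longrightarrow>
      v \<noteq> 0 \<and> (\<exists>Us. infinite Us \<and> (\<forall>u\<in>Us. u \<noteq> 0 \<and> laurent_eval f S u v = 0))"
  shows "\<forall>e\<in>S. f e = 0"
proof -
  define f' where "f' p q = (if (p, q) \<in> S then (of_int (f (p, q)) :: complex) else 0)" for p q
  have inner: "\<forall>p\<in>fst ` S. (\<Sum>q\<in>snd ` S. f' p q * v powi q) = 0" if v: "v \<in> Vs" for v
  proof -
    obtain Us where "infinite Us" "\<forall>u\<in>Us. u \<noteq> 0 \<and> laurent_eval f S u v = 0"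
      using zero[OF v] by blast
    then show ?thesis
      by (intro laurent_poly_eq_0_on_infinite[of "fst ` S" Us])
         (use S laurent_eval_iterated[OF S, of f _ v] in \<open>auto simp: f'_def\<close>)
  qed
  have "\<forall>q\<in>snd ` S. f' p q = 0" if "p \<in> fst ` S" for p
    by (rule laurent_poly_eq_0_on_infinite[of "snd ` S" Vs]) (use S V zero inner that in auto)
  then show ?thesis
    unfolding f'_def by force
qed

section \<open>Transfer from a generic triangle to all triangles\<close>

text \<open>For a triangle with side lengths a = |A2 - A3|, b = |A3 - A1|, c = |A1 - A2| the law
of cosines gives edge_dot3 a b c = Re ((A1 - A3) cnj (A3 - A2)) and
edge_dot2 a b c = Re ((A2 - A1) cnj (A3 - A2)). With Y = Im ((A1 - A3) cnj (A3 - A2)), twice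
the signed area, corner3 and corner2 are these two products, Y^2 = area_form a b c, and
phase3, phase2 are the rotation factors lam12, lam13 of r1 r2 and r1 r3.\<close>

definition edge_dot3 :: "real \<Rightarrow> real \<Rightarrow> real \<Rightarrow> real" where
  "edge_dot3 a b c = (c\<^sup>2 - a\<^sup>2 - b\<^sup>2) / 2"

definition edge_dot2 :: "real \<Rightarrow> real \<Rightarrow> real \<Rightarrow> real" where
  "edge_dot2 a b c = (b\<^sup>2 - c\<^sup>2 - a\<^sup>2) / 2"

definition area_form :: "real \<Rightarrow> real \<Rightarrow> real \<Rightarrow> real" where
  "area_form a b c = a\<^sup>2 * b\<^sup>2 - (edge_dot3 a b c)\<^sup>2"

definition corner3 :: "real \<Rightarrow> real \<Rightarrow> real \<Rightarrow> real \<Rightarrow> complex" where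
  "corner3 a b c Y = of_real (edge_dot3 a b c) + \<i> * of_real Y"

definition corner2 :: "real \<Rightarrow> real \<Rightarrow> real \<Rightarrow> real \<Rightarrow> complex" where
  "corner2 a b c Y = of_real (edge_dot2 a b c) - \<i> * of_real Y"

definition phase3 :: "real \<Rightarrow> real \<Rightarrow> real \<Rightarrow> real \<Rightarrow> complex" where
  "phase3 a b c Y = corner3 a b c Y ^ 2 / of_real (a\<^sup>2 * b\<^sup>2)"

definition phase2 :: "real \<Rightarrow> real \<Rightarrow> real \<Rightarrow> real \<Rightarrow> complex" where
  "phase2 a b c Y = corner2 a b c Y ^ 2 / of_real (c\<^sup>2 * a\<^sup>2)"

lemma rat_poly3_edge_dot3: "rat_poly3 edge_dot3"
proof -
  have "rat_poly3 (\<lambda>x y z. (z\<^sup>2 - x\<^sup>2 - y\<^sup>2) / 2)"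
    by (intro rat_poly3_divide2 rat_poly3_diff rat_poly3_power rat_poly3_var1 rat_poly3_var2 rat_poly3_var3)
  then show ?thesis
    unfolding edge_dot3_def .
qed

lemma rat_poly3_edge_dot2: "rat_poly3 edge_dot2"
proof -
  have "rat_poly3 (\<lambda>x y z. (y\<^sup>2 - z\<^sup>2 - x\<^sup>2) / 2)"
    by (intro rat_poly3_divide2 rat_poly3_diff rat_poly3_power rat_poly3_var1 rat_poly3_var2 rat_poly3_var3)
  then show ?thesis
    unfolding edge_dot2_def .
qed

lemma rat_poly3_area_form: "rat_poly3 area_form"
proof -
  have "rat_poly3 (\<lambda>x y z. x\<^sup>2 * y\<^sup>2 - (edge_dot3 x y z)\<^sup>2)"
    by (intro rat_poly3_diff rat_poly3_mult rat_poly3_power rat_poly3_var1 rat_poly3_var2 rat_poly3_edge_dot3)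
  then show ?thesis
    unfolding area_form_def .
qed

definition area_poly :: "(real \<Rightarrow> real \<Rightarrow> real \<Rightarrow> real \<Rightarrow> complex) \<Rightarrow> bool" where
  "area_poly G \<longleftrightarrow> (\<exists>P Q. rat_poly3 P \<and> rat_poly3 Q \<and> (\<forall>a b c Y. Y\<^sup>2 = area_form a b c \<longrightarrow>
      G a b c Y = of_real (P a b c) + \<i> * of_real Y * of_real (Q a b c)))"

lemma area_poly_intro:
  assumes "rat_poly3 P" "rat_poly3 Q"
    and "\<And>a b c Y. Y\<^sup>2 = area_form a b c \<Longrightarrow> G a b c Y = of_real (P a b c) + \<i> * of_real Y * of_real (Q a b c)"
  shows "area_poly G"
  using assms unfolding area_poly_def by blast

lemma area_poly_obtain:
  assumes "area_poly G"
  obtains P Q where "rat_poly3 P" "rat_poly3 Q"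
    "\<And>a b c Y. Y\<^sup>2 = area_form a b c \<Longrightarrow> G a b c Y = of_real (P a b c) + \<i> * of_real Y * of_real (Q a b c)"
  using assms unfolding area_poly_def by blast

lemma area_poly_real: "rat_poly3 P \<Longrightarrow> area_poly (\<lambda>a b c Y. of_real (P a b c))"
  by (rule area_poly_intro[of P "\<lambda>_ _ _. 0"]) (simp_all add: rat_poly3_const[of 0, simplified])

lemma area_poly_const: "area_poly (\<lambda>a b c Y. of_int k)"
  using area_poly_real[OF rat_poly3_const[of "of_int k"]] by simp

lemma area_poly_corner3: "area_poly corner3"
  by (rule area_poly_intro[OF rat_poly3_edge_dot3 rat_poly3_const[of 1]]) (simp add: corner3_def)

lemma area_poly_corner2: "area_poly corner2"
  by (rule area_poly_intro[OF rat_poly3_edge_dot2 rat_poly3_const[of "-1"]]) (simp add: corner2_def)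

lemma area_poly_add:
  assumes "area_poly F" "area_poly G"
  shows "area_poly (\<lambda>a b c Y. F a b c Y + G a b c Y)"
proof -
  obtain P Q P' Q' where "rat_poly3 P" "rat_poly3 Q" "rat_poly3 P'" "rat_poly3 Q'"
    and "\<And>a b c Y. Y\<^sup>2 = area_form a b c \<Longrightarrow> F a b c Y = of_real (P a b c) + \<i> * of_real Y * of_real (Q a b c)"
    and "\<And>a b c Y. Y\<^sup>2 = area_form a b c \<Longrightarrow> G a b c Y = of_real (P' a b c) + \<i> * of_real Y * of_real (Q' a b c)"
    using area_poly_obtain[OF assms(1)] area_poly_obtain[OF assms(2)] by metis
  then show ?thesis
    by (intro area_poly_intro[of "\<lambda>a b c. P a b c + P' a b c" "\<lambda>a b c. Q a b c + Q' a b c"])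
       (auto intro: rat_poly3_add simp: algebra_simps)
qed

lemma area_poly_mult:
  assumes "area_poly F" "area_poly G"
  shows "area_poly (\<lambda>a b c Y. F a b c Y * G a b c Y)"
proof -
  obtain P Q P' Q' where PQ: "rat_poly3 P" "rat_poly3 Q" "rat_poly3 P'" "rat_poly3 Q'"
    and F: "\<And>a b c Y. Y\<^sup>2 = area_form a b c \<Longrightarrow> F a b c Y = of_real (P a b c) + \<i> * of_real Y * of_real (Q a b c)"
    and G: "\<And>a b c Y. Y\<^sup>2 = area_form a b c \<Longrightarrow> G a b c Y = of_real (P' a b c) + \<i> * of_real Y * of_real (Q' a b c)"
    using area_poly_obtain[OF assms(1)] area_poly_obtain[OF assms(2)] by metis
  show ?thesis
  proof (rule area_poly_intro)
    fix a b c Y assume Y: "Y\<^sup>2 = area_form a b c"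
    have "F a b c Y * G a b c Y = of_real (P a b c * P' a b c - Y\<^sup>2 * (Q a b c * Q' a b c))
        + \<i> * of_real Y * of_real (P a b c * Q' a b c + Q a b c * P' a b c)"
      unfolding F[OF Y] G[OF Y] by (simp add: algebra_simps power2_eq_square)
    then show "F a b c Y * G a b c Y =
        of_real (P a b c * P' a b c - area_form a b c * (Q a b c * Q' a b c))
        + \<i> * of_real Y * of_real (P a b c * Q' a b c + Q a b c * P' a b c)"
      by (simp add: Y)
  qed (intro rat_poly3_add rat_poly3_mult rat_poly3_diff rat_poly3_area_form PQ)+
qed

lemma area_poly_power: "area_poly F \<Longrightarrow> area_poly (\<lambda>a b c Y. F a b c Y ^ n)"
proof (induction n)
  case 0
  then show ?case
    using area_poly_const[of 1] by simp
next
  case (Suc n)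
  then show ?case
    using area_poly_mult[OF Suc(2) Suc(1)[OF Suc(2)]] by simp
qed

lemma area_poly_sum:
  "finite I \<Longrightarrow> (\<And>i. i \<in> I \<Longrightarrow> area_poly (F i)) \<Longrightarrow> area_poly (\<lambda>a b c Y. \<Sum>i\<in>I. F i a b c Y)"
proof (induction I rule: finite_induct)
  case empty
  then show ?case
    using area_poly_const[of 0] by simp
next
  case (insert a I)
  then show ?case
    using area_poly_add[of "F a" "\<lambda>a' b c Y. \<Sum>i\<in>I. F i a' b c Y"] by simp
qed

text \<open>Since Y0 is real and nonzero, both rational polynomials P and Q vanish at the
algebraically independent point, hence everywhere.\<close>

lemma area_poly_transfer:
  assumes indep: "alg_indep3 a0 b0 c0" and Y0: "Y0\<^sup>2 = area_form a0 b0 c0" "Y0 \<noteq> 0"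
    and zero: "G a0 b0 c0 Y0 = 0" and G: "area_poly G" and Y: "Y\<^sup>2 = area_form a b c"
  shows "G a b c Y = 0"
proof -
  obtain P Q where "rat_poly3 P" "rat_poly3 Q"
    and G_eq: "\<And>a b c Y. Y\<^sup>2 = area_form a b c \<Longrightarrow> G a b c Y = of_real (P a b c) + \<i> * of_real Y * of_real (Q a b c)"
    using area_poly_obtain[OF G] by metis
  moreover have "P a0 b0 c0 = 0" "Q a0 b0 c0 = 0"
    using zero G_eq[OF Y0(1)] Y0(2) by (simp_all add: complex_eq_iff)
  ultimately have "P a b c = 0" "Q a b c = 0"
    using alg_indep3_rat_poly3_zero[OF indep] by blast+
  then show ?thesis
    using G_eq[OF Y] by simp
qed

text \<open>The Laurent polynomial at (phase3, phase2), multiplied by large powers of the phases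
and of a^2 b^2, c^2 a^2: this clears negative exponents and denominators
(cleared_laurent_eq) and makes it an area_poly.\<close>

definition cleared_laurent ::
    "(int \<times> int \<Rightarrow> int) \<Rightarrow> (int \<times> int) set \<Rightarrow> int \<Rightarrow> real \<Rightarrow> real \<Rightarrow> real \<Rightarrow> real \<Rightarrow> complex" where
  "cleared_laurent f S K a b c Y = (\<Sum>e\<in>S. of_int (f e) *
     corner3 a b c Y ^ (2 * nat (fst e + K)) * of_real (a\<^sup>2 * b\<^sup>2) ^ nat (K - fst e) *
     corner2 a b c Y ^ (2 * nat (snd e + K)) * of_real (c\<^sup>2 * a\<^sup>2) ^ nat (K - snd e))"

lemma area_poly_cleared_laurent: "finite S \<Longrightarrow> area_poly (cleared_laurent f S K)"
  unfolding cleared_laurent_def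
  by (intro area_poly_sum area_poly_mult area_poly_power area_poly_real area_poly_const
        area_poly_corner3 area_poly_corner2 rat_poly3_mult rat_poly3_power
        rat_poly3_var1 rat_poly3_var2 rat_poly3_var3)

lemma power_clear_powi:
  fixes z U :: complex and n :: real
  assumes z: "z\<^sup>2 = U * of_real n" and "U \<noteq> 0" "- K \<le> p" "p \<le> K"
  shows "z ^ (2 * nat (p + K)) * of_real n ^ nat (K - p) = U ^ nat K * U powi p * of_real n ^ (2 * nat K)"
proof -
  have sum: "nat (p + K) + nat (K - p) = 2 * nat K"
    using assms by auto
  have "U ^ nat (p + K) = U powi (p + K)" "U powi K = U ^ nat K"
    using assms by (simp_all add: power_int_def)
  moreover have "U powi (p + K) = U powi p * U powi K"
    using assms by (simp add: power_int_add)
  ultimately have "U ^ nat (p + K) = U ^ nat K * U powi p"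
    by simp
  moreover have "z ^ (2 * nat (p + K)) = U ^ nat (p + K) * of_real n ^ nat (p + K)"
    unfolding power_mult z power_mult_distrib ..
  moreover have "of_real n ^ nat (p + K) * of_real n ^ nat (K - p) = (of_real n :: complex) ^ (2 * nat K)"
    unfolding power_add[symmetric] sum ..
  ultimately show ?thesis
    by (simp add: mult_ac)
qed

lemma corners_nonzero: "Y \<noteq> 0 \<Longrightarrow> corner3 a b c Y \<noteq> 0 \<and> corner2 a b c Y \<noteq> 0"
  by (simp add: corner3_def corner2_def complex_eq_iff)

lemma phases_nonzero: "a \<noteq> 0 \<Longrightarrow> b \<noteq> 0 \<Longrightarrow> c \<noteq> 0 \<Longrightarrow> Y \<noteq> 0 \<Longrightarrow> phase3 a b c Y \<noteq> 0 \<and> phase2 a b c Y \<noteq> 0"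
  using corners_nonzero by (simp add: phase3_def phase2_def)

lemma cleared_laurent_eq:
  assumes "a \<noteq> 0" "b \<noteq> 0" "c \<noteq> 0" "Y \<noteq> 0"
    and bound: "\<forall>e\<in>S. - K \<le> fst e \<and> fst e \<le> K \<and> - K \<le> snd e \<and> snd e \<le> K"
  defines "U \<equiv> phase3 a b c Y" and "V \<equiv> phase2 a b c Y"
  shows "cleared_laurent f S K a b c Y = U ^ nat K * V ^ nat K *
    of_real (a\<^sup>2 * b\<^sup>2) ^ (2 * nat K) * of_real (c\<^sup>2 * a\<^sup>2) ^ (2 * nat K) * laurent_eval f S U V"
  unfolding cleared_laurent_def laurent_eval_def sum_distrib_left
proof (rule sum.cong[OF refl])
  fix e assume e: "e \<in> S"
  have UV: "corner3 a b c Y ^ 2 = U * of_real (a\<^sup>2 * b\<^sup>2)" "U \<noteq> 0"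
    "corner2 a b c Y ^ 2 = V * of_real (c\<^sup>2 * a\<^sup>2)" "V \<noteq> 0"
    using assms phases_nonzero by (simp_all add: phase3_def phase2_def)
  show "of_int (f e) * corner3 a b c Y ^ (2 * nat (fst e + K)) * of_real (a\<^sup>2 * b\<^sup>2) ^ nat (K - fst e)
     * corner2 a b c Y ^ (2 * nat (snd e + K)) * of_real (c\<^sup>2 * a\<^sup>2) ^ nat (K - snd e)
     = U ^ nat K * V ^ nat K * of_real (a\<^sup>2 * b\<^sup>2) ^ (2 * nat K) * of_real (c\<^sup>2 * a\<^sup>2) ^ (2 * nat K) *
       (of_int (f e) * U powi fst e * V powi snd e)"
    using power_clear_powi[OF UV(1,2), of K "fst e"] power_clear_powi[OF UV(3,4), of K "snd e"] bound e
    by (simp add: mult_ac)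
qed

lemma laurent_eval_phase_transfer:
  assumes indep: "alg_indep3 a0 b0 c0" and Y0: "Y0\<^sup>2 = area_form a0 b0 c0" "Y0 \<noteq> 0"
    and nonzero0: "a0 \<noteq> 0" "b0 \<noteq> 0" "c0 \<noteq> 0" and S: "finite S"
    and zero: "laurent_eval f S (phase3 a0 b0 c0 Y0) (phase2 a0 b0 c0 Y0) = 0"
    and Y: "Y\<^sup>2 = area_form a b c" "Y \<noteq> 0" and nonzero: "a \<noteq> 0" "b \<noteq> 0" "c \<noteq> 0"
  shows "laurent_eval f S (phase3 a b c Y) (phase2 a b c Y) = 0"
proof -
  obtain K1 where "K1 \<ge> 0" "\<forall>p\<in>fst ` S. - K1 \<le> p \<and> p \<le> K1"
    using finite_int_set_bounded[of "fst ` S"] S by auto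
  moreover obtain K2 where "K2 \<ge> 0" "\<forall>p\<in>snd ` S. - K2 \<le> p \<and> p \<le> K2"
    using finite_int_set_bounded[of "snd ` S"] S by auto
  ultimately obtain K where bound: "\<forall>e\<in>S. - K \<le> fst e \<and> fst e \<le> K \<and> - K \<le> snd e \<and> snd e \<le> K"
    by (intro that[of "K1 + K2"]) force
  have "cleared_laurent f S K a0 b0 c0 Y0 = 0"
    using cleared_laurent_eq[OF nonzero0 Y0(2) bound] zero by simp
  then have "cleared_laurent f S K a b c Y = 0"
    by (rule area_poly_transfer[OF indep Y0 _ area_poly_cleared_laurent[OF S] Y(1)])
  moreover have "phase3 a b c Y \<noteq> 0" "phase2 a b c Y \<noteq> 0"
    using phases_nonzero[OF nonzero Y(2)] by simp_all
  ultimately show ?thesis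
    using cleared_laurent_eq[OF nonzero Y(2) bound] nonzero by simp
qed

lemma complex_sq_div_norm_sq: "z \<noteq> 0 \<Longrightarrow> z\<^sup>2 / of_real ((cmod z)\<^sup>2) = z / cnj z"
  unfolding complex_norm_square by (simp add: power2_eq_square)

lemma test_triangle:
  assumes "Im w \<noteq> 0"
  shows "(- Im w)\<^sup>2 = area_form 1 (cmod w) (cmod (w - 1))"
    and "phase3 1 (cmod w) (cmod (w - 1)) (- Im w) = w / cnj w"
    and "phase2 1 (cmod w) (cmod (w - 1)) (- Im w) = (w - 1) / cnj (w - 1)"
proof -
  have nonzero: "w \<noteq> 0" "w - 1 \<noteq> 0"
    using assms by (auto simp: complex_eq_iff)
  have norms: "(cmod w)\<^sup>2 = (Re w)\<^sup>2 + (Im w)\<^sup>2" "(cmod (w - 1))\<^sup>2 = (Re w - 1)\<^sup>2 + (Im w)\<^sup>2"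
    by (simp_all add: cmod_power2)
  have dots: "edge_dot3 1 (cmod w) (cmod (w - 1)) = - Re w" "edge_dot2 1 (cmod w) (cmod (w - 1)) = Re w - 1"
    unfolding edge_dot3_def edge_dot2_def norms by (simp_all add: power2_eq_square field_simps)
  then show "(- Im w)\<^sup>2 = area_form 1 (cmod w) (cmod (w - 1))"
    unfolding area_form_def norms by simp
  have "corner3 1 (cmod w) (cmod (w - 1)) (- Im w) = - w"
    "corner2 1 (cmod w) (cmod (w - 1)) (- Im w) = w - 1"
    unfolding corner3_def corner2_def dots by (simp_all add: complex_eq_iff)
  then show "phase3 1 (cmod w) (cmod (w - 1)) (- Im w) = w / cnj w"
    and "phase2 1 (cmod w) (cmod (w - 1)) (- Im w) = (w - 1) / cnj (w - 1)"
    using complex_sq_div_norm_sq nonzero by (simp_all add: phase3_def phase2_def)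
qed

lemma phase_eq_imp_real_ratio:
  assumes "z1 \<noteq> 0" "z2 \<noteq> 0" "z1 / cnj z1 = z2 / cnj z2"
  shows "Im (z1 * cnj z2) = 0"
proof -
  have "z1 * cnj z2 = z2 * cnj z1"
    using assms by (simp add: field_simps)
  then have "Im (z1 * cnj z2) = Im (z2 * cnj z1)"
    by simp
  then show ?thesis
    by (simp add: algebra_simps)
qed

lemma infinite_phases_on_ray:
  assumes "Im (p * cnj d) \<noteq> 0"
  shows "infinite ((\<lambda>t. (p + of_real t * d) / cnj (p + of_real t * d)) ` {0<..})"
proof
  have nonzero: "p + of_real t * d \<noteq> 0" for t
  proof
    assume "p + of_real t * d = 0"
    then have "p * cnj d = - of_real t * (d * cnj d)"
      by (simp add: eq_neg_iff_add_eq_0[symmetric])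
    also have "\<dots> = - of_real (t * (cmod d)\<^sup>2)"
      by (simp only: complex_norm_square[symmetric] of_real_mult) simp
    finally have "p * cnj d = - of_real (t * (cmod d)\<^sup>2)" .
    then show False
      using assms by simp
  qed
  have "inj_on (\<lambda>t. (p + of_real t * d) / cnj (p + of_real t * d)) {0<..}"
  proof (rule inj_onI)
    fix t1 t2 :: real
    assume "(p + of_real t1 * d) / cnj (p + of_real t1 * d) = (p + of_real t2 * d) / cnj (p + of_real t2 * d)"
    then have "Im ((p + of_real t1 * d) * cnj (p + of_real t2 * d)) = 0"
      using nonzero by (intro phase_eq_imp_real_ratio)
    then have "(t2 - t1) * Im (p * cnj d) = 0"
      by (simp add: algebra_simps)
    then show "t1 = t2"
      using assms by simp
  qed
  moreover assume "finite ((\<lambda>t. (p + of_real t * d) / cnj (p + of_real t * d)) ` {0<..})"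
  ultimately show False
    using finite_imageD infinite_Ioi by blast
qed

text \<open>For fixed s > 0 the points w = 1 + t (1 + s \<i>), t > 0, all have the same phase of
w - 1, while the phase of w takes infinitely many values.\<close>

lemma laurent_eval_eq_0_on_phases:
  assumes S: "finite S"
    and zero: "\<And>w. Im w \<noteq> 0 \<Longrightarrow> laurent_eval f S (w / cnj w) ((w - 1) / cnj (w - 1)) = 0"
  shows "\<forall>e\<in>S. f e = 0"
proof (rule laurent_eval_eq_0_on_infinite[OF S])
  define phase where "phase z = z / cnj z" for z :: complex
  have phase_nonzero: "phase z \<noteq> 0" if "z \<noteq> 0" for z
    using that by (simp add: phase_def)
  show "infinite ((\<lambda>s. phase (1 + of_real s * \<i>)) ` {0<..})"
    using infinite_phases_on_ray[of 1 \<i>] by (simp add: phase_def)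
  fix v assume "v \<in> (\<lambda>s. phase (1 + of_real s * \<i>)) ` {0<..}"
  then obtain s where s: "s > 0" and v: "v = phase (1 + of_real s * \<i>)"
    by blast
  define d where "d = 1 + of_real s * \<i>"
  have "d \<noteq> 0" "Im (1 * cnj d) \<noteq> 0"
    using s by (simp_all add: d_def complex_eq_iff)
  have "u \<noteq> 0 \<and> laurent_eval f S u v = 0" if "u \<in> (\<lambda>t. phase (1 + of_real t * d)) ` {0<..}" for u
  proof -
    obtain t where t: "t > 0" and u: "u = phase (1 + of_real t * d)"
      using \<open>u \<in> _\<close> by blast
    have Im: "Im (1 + of_real t * d) \<noteq> 0"
      using s t by (simp add: d_def)
    then have "1 + of_real t * d \<noteq> 0"
      by (metis zero_complex.sel(2))
    then have "u \<noteq> 0"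
      unfolding u by (rule phase_nonzero)
    moreover have "phase (1 + of_real t * d - 1) = v"
      using t \<open>d \<noteq> 0\<close> by (simp add: phase_def v d_def)
    ultimately show ?thesis
      using zero[OF Im] by (simp add: u phase_def)
  qed
  moreover have "infinite ((\<lambda>t. phase (1 + of_real t * d)) ` {0<..})"
    using infinite_phases_on_ray[OF \<open>Im (1 * cnj d) \<noteq> 0\<close>] by (simp add: phase_def)
  moreover have "v \<noteq> 0"
    using phase_nonzero[OF \<open>d \<noteq> 0\<close>] by (simp add: v d_def)
  ultimately show "v \<noteq> 0 \<and> (\<exists>Us. infinite Us \<and> (\<forall>u\<in>Us. u \<noteq> 0 \<and> laurent_eval f S u v = 0))"
    by blast
qed

lemma phases_scale:
  assumes "k \<noteq> 0"
  shows "phase3 (k * a) (k * b) (k * c) (k\<^sup>2 * Y) = phase3 a b c Y"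
    and "phase2 (k * a) (k * b) (k * c) (k\<^sup>2 * Y) = phase2 a b c Y"
    and "area_form (k * a) (k * b) (k * c) = (k\<^sup>2)\<^sup>2 * area_form a b c"
proof -
  have dots: "edge_dot3 (k * a) (k * b) (k * c) = k\<^sup>2 * edge_dot3 a b c"
    "edge_dot2 (k * a) (k * b) (k * c) = k\<^sup>2 * edge_dot2 a b c"
    by (simp_all add: edge_dot3_def edge_dot2_def power_mult_distrib algebra_simps)
  then have "corner3 (k * a) (k * b) (k * c) (k\<^sup>2 * Y) = of_real (k\<^sup>2) * corner3 a b c Y"
    "corner2 (k * a) (k * b) (k * c) (k\<^sup>2 * Y) = of_real (k\<^sup>2) * corner2 a b c Y"
    by (simp_all add: corner3_def corner2_def algebra_simps)
  then show "phase3 (k * a) (k * b) (k * c) (k\<^sup>2 * Y) = phase3 a b c Y"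
    and "phase2 (k * a) (k * b) (k * c) (k\<^sup>2 * Y) = phase2 a b c Y"
    using assms by (simp_all add: phase3_def phase2_def power_mult_distrib field_simps)
  show "area_form (k * a) (k * b) (k * c) = (k\<^sup>2)\<^sup>2 * area_form a b c"
    unfolding area_form_def dots by (simp add: power_mult_distrib algebra_simps)
qed

definition laurent_independent :: "complex \<Rightarrow> complex \<Rightarrow> bool" where
  "laurent_independent u v \<longleftrightarrow>
     (\<forall>f S. finite S \<longrightarrow> laurent_eval f S u v = 0 \<longrightarrow> (\<forall>e\<in>S. f e = 0))"

lemma laurent_independentD:
  "laurent_independent u v \<Longrightarrow> finite S \<Longrightarrow> laurent_eval f S u v = 0 \<Longrightarrow> e \<in> S \<Longrightarrow> f e = 0"
  unfolding laurent_independent_def by blast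

definition line_dir :: "complex \<Rightarrow> complex \<Rightarrow> complex" where
  "line_dir a b = (b - a) / cnj (b - a)"

lemma nondegenerate_triangle_distinct:
  assumes "nondegenerate_triangle A1 A2 A3"
  shows "A1 \<noteq> A2" "A2 \<noteq> A3" "A3 \<noteq> A1"
  using assms by (auto simp: nondegenerate_triangle_def algebra_simps)

lemma triangle_phases:
  assumes nd: "nondegenerate_triangle A1 A2 A3"
  defines "a \<equiv> cmod (A2 - A3)" and "b \<equiv> cmod (A3 - A1)" and "c \<equiv> cmod (A1 - A2)"
    and "Y \<equiv> Im ((A1 - A3) * cnj (A3 - A2))"
  shows "Y\<^sup>2 = area_form a b c" "Y \<noteq> 0"
    and "phase3 a b c Y = line_dir A3 A1 * cnj (line_dir A2 A3)"
    and "phase2 a b c Y = line_dir A1 A2 * cnj (line_dir A2 A3)"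
proof -
  define z where "z = (A1 - A3) * cnj (A3 - A2)"
  define z' where "z' = (A2 - A1) * cnj (A3 - A2)"
  note distinct = nondegenerate_triangle_distinct[OF nd]
  have sq: "a\<^sup>2 = (Re A2 - Re A3)\<^sup>2 + (Im A2 - Im A3)\<^sup>2" "b\<^sup>2 = (Re A3 - Re A1)\<^sup>2 + (Im A3 - Im A1)\<^sup>2"
    "c\<^sup>2 = (Re A1 - Re A2)\<^sup>2 + (Im A1 - Im A2)\<^sup>2"
    by (simp_all add: a_def b_def c_def cmod_power2)
  have Re: "Re z = edge_dot3 a b c" "Re z' = edge_dot2 a b c"
    unfolding edge_dot3_def edge_dot2_def sq z_def z'_def by (simp_all add: power2_eq_square algebra_simps)
  show "Y\<^sup>2 = area_form a b c"
    unfolding area_form_def Re(1)[symmetric] sq Y_def z_def by (simp add: power2_eq_square algebra_simps)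
  show "Y \<noteq> 0"
    using nd by (simp add: Y_def nondegenerate_triangle_def algebra_simps)
  moreover have Im: "Im z = Y" "Im z' = - Y"
    by (simp_all add: z_def z'_def Y_def algebra_simps)
  ultimately have "z \<noteq> 0" "z' \<noteq> 0"
    by auto
  moreover have "corner3 a b c Y = z" "corner2 a b c Y = z'"
    using Im by (simp_all add: corner3_def corner2_def Re[symmetric] complex_eq_iff)
  moreover have "cmod z = b * a" "cmod z' = c * a"
    unfolding z_def z'_def a_def b_def c_def norm_mult complex_mod_cnj by (simp_all add: norm_minus_commute)
  ultimately have "phase3 a b c Y = z / cnj z" "phase2 a b c Y = z' / cnj z'"
    using complex_sq_div_norm_sq[of z] complex_sq_div_norm_sq[of z']
    by (simp_all add: phase3_def phase2_def mult.commute power_mult_distrib)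
  moreover have "z / cnj z = line_dir A3 A1 * cnj (line_dir A2 A3)"
    "z' / cnj z' = line_dir A1 A2 * cnj (line_dir A2 A3)"
    using distinct by (simp_all add: z_def z'_def line_dir_def field_simps)
  ultimately show "phase3 a b c Y = line_dir A3 A1 * cnj (line_dir A2 A3)"
    and "phase2 a b c Y = line_dir A1 A2 * cnj (line_dir A2 A3)"
    by simp_all
qed

lemma generic_triangle_laurent_independent:
  assumes nd: "nondegenerate_triangle A1 A2 A3" and gen: "generic_triangle A1 A2 A3"
  shows "laurent_independent (line_dir A3 A1 * cnj (line_dir A2 A3)) (line_dir A1 A2 * cnj (line_dir A2 A3))"
  unfolding laurent_independent_def
proof (intro allI impI)
  fix f S assume S: "finite S"
    and zero: "laurent_eval f S (line_dir A3 A1 * cnj (line_dir A2 A3)) (line_dir A1 A2 * cnj (line_dir A2 A3)) = 0"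
  define a b c Y where "a = cmod (A2 - A3)" and "b = cmod (A3 - A1)" and "c = cmod (A1 - A2)"
    and "Y = Im ((A1 - A3) * cnj (A3 - A2))"
  obtain k where "k > 0" and indep: "alg_indep3 (k * a) (k * b) (k * c)"
    using gen unfolding generic_triangle_def a_def b_def c_def by blast
  note phases = triangle_phases[OF nd, folded a_def b_def c_def Y_def]
  have nonzero: "k * a \<noteq> 0" "k * b \<noteq> 0" "k * c \<noteq> 0"
    using \<open>k > 0\<close> nondegenerate_triangle_distinct[OF nd] by (auto simp: a_def b_def c_def)
  have "laurent_eval f S (w / cnj w) ((w - 1) / cnj (w - 1)) = 0" if "Im w \<noteq> 0" for w
    using laurent_eval_phase_transfer[OF indep _ _ nonzero S, of "k\<^sup>2 * Y" f "- Im w" 1 "cmod w" "cmod (w - 1)"]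
      phases phases_scale[of k] \<open>k > 0\<close> zero test_triangle[OF that] that
    by (auto simp: power_mult_distrib complex_eq_iff)
  then show "\<forall>e\<in>S. f e = 0"
    by (rule laurent_eval_eq_0_on_phases[OF S])
qed

section \<open>The presented group\<close>

lemma word_step_append_context: "word_step R x y \<Longrightarrow> word_step R (p @ x @ s) (p @ y @ s)"
proof (induction rule: word_step.induct)
  case (cancel u v a)
  then show ?case
    using word_step.cancel[of R "p @ u" "v @ s" a] by simp
next
  case (relator r u v)
  then show ?case
    using word_step.relator[of r R "p @ u" "v @ s"] by simp
qed

lemma word_equiv_append_context: "word_equiv R x y \<Longrightarrow> word_equiv R (p @ x @ s) (p @ y @ s)"
  unfolding word_equiv_def
proof (induction rule: rtranclp_induct)
  case (step y z)
  then have "(sup (word_step R) (word_step R)\<inverse>\<inverse>) (p @ y @ s) (p @ z @ s)"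
    using word_step_append_context by auto
  with step(3) show ?case
    by (rule rtranclp.rtrancl_into_rtrancl)
qed simp

lemma word_equiv_refl: "word_equiv R x x"
  unfolding word_equiv_def by simp

lemma word_equiv_sym: "word_equiv R x y \<Longrightarrow> word_equiv R y x"
  unfolding word_equiv_def
proof (induction rule: rtranclp_induct)
  case (step y z)
  then have "(sup (word_step R) (word_step R)\<inverse>\<inverse>) z y"
    by auto
  then show ?case
    using step(3) by (rule converse_rtranclp_into_rtranclp)
qed simp

lemma word_equiv_trans: "word_equiv R x y \<Longrightarrow> word_equiv R y z \<Longrightarrow> word_equiv R x z"
  unfolding word_equiv_def by (rule rtranclp_trans)

lemma equivp_word_equiv: "equivp (word_equiv R)"
  by (rule equivpI) (auto simp: reflp_def symp_def transp_def
      intro: word_equiv_refl word_equiv_sym word_equiv_trans)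

lemma word_equiv_append: "word_equiv R x y \<Longrightarrow> word_equiv R x' y' \<Longrightarrow> word_equiv R (x @ x') (y @ y')"
  using word_equiv_append_context[of R x y "[]" x'] word_equiv_append_context[of R x' y' y "[]"]
  by (auto intro: word_equiv_trans)

lemma inv_word_Nil [simp]: "inv_word [] = []"
  by (simp add: inv_word_def)

lemma inv_word_Cons: "inv_word (a # w) = inv_word w @ [inv_letter a]"
  by (simp add: inv_word_def)

lemma inv_letter_inv_letter [simp]: "inv_letter (inv_letter a) = a"
  by (simp add: inv_letter_def)

lemma inv_word_inv_word [simp]: "inv_word (inv_word w) = w"
  by (simp add: inv_word_def rev_map o_def)

lemma word_equiv_cancel: "word_equiv R [a, inv_letter a] []"
  using word_step.cancel[of R "[]" "[]" a] unfolding word_equiv_def by auto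

lemma word_equiv_relator: "r \<in> R \<Longrightarrow> word_equiv R r []"
  using word_step.relator[of r R "[]" "[]"] unfolding word_equiv_def by auto

lemma word_equiv_right_inverse: "word_equiv R (w @ inv_word w) []"
proof (induction w)
  case (Cons a w)
  have "word_equiv R ([a] @ (w @ inv_word w) @ [inv_letter a]) ([a] @ [] @ [inv_letter a])"
    by (rule word_equiv_append_context[OF Cons])
  then show ?case
    using word_equiv_cancel word_equiv_trans by (fastforce simp: inv_word_Cons)
qed (simp add: word_equiv_refl)

lemma word_equiv_left_inverse: "word_equiv R (inv_word w @ w) []"
  using word_equiv_right_inverse[of R "inv_word w"] by simp

lemma word_equiv_inv_word: "word_equiv R x y \<Longrightarrow> word_equiv R (inv_word x) (inv_word y)"
proof -
  assume xy: "word_equiv R x y"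
  have "word_equiv R (inv_word x @ [] @ []) (inv_word x @ (y @ inv_word y) @ [])"
    by (rule word_equiv_append_context[OF word_equiv_sym[OF word_equiv_right_inverse]])
  moreover have "word_equiv R ([] @ (inv_word x @ y) @ inv_word y) ([] @ (inv_word x @ x) @ inv_word y)"
    by (intro word_equiv_append_context word_equiv_append word_equiv_refl word_equiv_sym[OF xy])
  moreover have "word_equiv R ([] @ (inv_word x @ x) @ inv_word y) ([] @ [] @ inv_word y)"
    by (rule word_equiv_append_context[OF word_equiv_left_inverse])
  ultimately show ?thesis
    by (auto intro: word_equiv_trans)
qed

text \<open>The presented group is made an instance of group_add, so the group product g h of the
paper is written g + h here.\<close>

quotient_type tri_group = "letter list" / "word_equiv tri_relators"
  by (rule equivp_word_equiv)

instantiation tri_group :: group_add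
begin

lift_definition zero_tri_group :: tri_group is "[]" .

lift_definition plus_tri_group :: "tri_group \<Rightarrow> tri_group \<Rightarrow> tri_group" is "(@)"
  by (rule word_equiv_append)

lift_definition uminus_tri_group :: "tri_group \<Rightarrow> tri_group" is inv_word
  by (rule word_equiv_inv_word)

lift_definition minus_tri_group :: "tri_group \<Rightarrow> tri_group \<Rightarrow> tri_group" is "\<lambda>x y. x @ inv_word y"
  by (intro word_equiv_append word_equiv_inv_word)

instance
proof
  fix a b c :: tri_group
  show "a + b + c = a + (b + c)"
    by transfer (simp add: word_equiv_refl)
  show "0 + a = a"
    by transfer (simp add: word_equiv_refl)
  show "a + 0 = a"
    by transfer (simp add: word_equiv_refl)
  show "- a + a = 0"
    by transfer (rule word_equiv_left_inverse)
  show "a + - b = a - b"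
    by transfer (simp add: word_equiv_refl)
qed

end

lemma abs_tri_group_append: "abs_tri_group (u @ v) = abs_tri_group u + abs_tri_group v"
  by (simp add: plus_tri_group.abs_eq)

lemma abs_tri_group_inv_word: "abs_tri_group (inv_word u) = - abs_tri_group u"
  by (simp add: uminus_tri_group.abs_eq)

lemma abs_tri_group_Nil: "abs_tri_group [] = 0"
  by (simp add: zero_tri_group_def)

lemma abs_tri_group_eq_0_iff: "abs_tri_group w = 0 \<longleftrightarrow> word_equiv tri_relators w []"
  by (metis abs_tri_group_Nil tri_group.abs_eq_iff)

lemma abs_tri_group_relator: "r \<in> tri_relators \<Longrightarrow> abs_tri_group r = 0"
  by (simp add: abs_tri_group_eq_0_iff word_equiv_relator)

fun npow :: "'a::group_add \<Rightarrow> nat \<Rightarrow> 'a" where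
  "npow x 0 = 0"
| "npow x (Suc n) = npow x n + x"

definition zpow :: "'a::group_add \<Rightarrow> int \<Rightarrow> 'a" where
  "zpow x n = (if n \<ge> 0 then npow x (nat n) else - npow x (nat (- n)))"

declare add_uminus_conv_diff [simp del]

lemma npow_commute: "x + npow x n = npow x n + x"
  by (induction n) (simp_all add: add.assoc[symmetric])

lemma npow_uminus: "npow (- x) n = - npow x n"
proof (induction n)
  case (Suc n)
  have "npow (- x) (Suc n) = - (x + npow x n)"
    using Suc by (simp add: minus_add)
  then show ?case
    by (simp add: npow_commute)
qed simp

lemma zpow_0 [simp]: "zpow x 0 = 0"
  by (simp add: zpow_def)

lemma zpow_1 [simp]: "zpow x 1 = x"
  by (simp add: zpow_def)

lemma zpow_minus_1 [simp]: "zpow x (- 1) = - x"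
  by (simp add: zpow_def)

lemma zpow_add_1: "zpow x (n + 1) = zpow x n + x"
proof (cases "n \<ge> 0")
  case True
  then have "nat (n + 1) = Suc (nat n)"
    by simp
  with True show ?thesis
    by (simp add: zpow_def)
next
  case False
  then have "nat (- n) = Suc (nat (- n - 1))" "nat (- (n + 1)) = nat (- n - 1)"
    by simp_all
  moreover have "- npow x k = - (npow x k + x) + x" for k
    by (simp add: minus_add add.assoc npow_commute[symmetric])
  ultimately show ?thesis
    using False by (cases "n = - 1") (simp_all add: zpow_def)
qed

lemma zpow_diff_1: "zpow x (n - 1) = zpow x n + - x"
  using zpow_add_1[of x "n - 1"] by (simp add: add.assoc)

lemma zpow_add: "zpow x (m + n) = zpow x m + zpow x n"
proof (induction n rule: int_induct[where k = 0])
  case (step1 i)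
  then show ?case
    using zpow_add_1[of x "m + i"] zpow_add_1[of x i] by (simp add: add.assoc)
next
  case (step2 i)
  then show ?case
    using zpow_diff_1[of x "m + i"] zpow_diff_1[of x i] by (simp add: add.assoc algebra_simps)
qed simp

lemma zpow_uminus: "zpow (- x) n = zpow x (- n)"
  by (simp add: zpow_def npow_uminus)

definition conjg :: "'a::group_add \<Rightarrow> 'a \<Rightarrow> 'a" where
  "conjg h x = - h + x + h"

definition commutes :: "'a::group_add \<Rightarrow> 'a \<Rightarrow> bool" where
  "commutes a b \<longleftrightarrow> a + b = b + a"

lemma conjg_add: "conjg h (x + y) = conjg h x + conjg h y"
  by (simp add: conjg_def add.assoc)

lemma conjg_uminus: "conjg h (- x) = - conjg h x"
  by (simp add: conjg_def minus_add add.assoc)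

lemma conjg_zero [simp]: "conjg h 0 = 0"
  by (simp add: conjg_def)

lemma conjg_by_zero [simp]: "conjg 0 x = x"
  by (simp add: conjg_def)

lemma conjg_conjg: "conjg (h + k) x = conjg k (conjg h x)"
  by (simp add: conjg_def minus_add add.assoc)

lemma conjg_zpow: "conjg h (zpow x n) = zpow (conjg h x) n"
proof -
  have "conjg h (npow x k) = npow (conjg h x) k" for k
    by (induction k) (simp_all add: conjg_add)
  then show ?thesis
    by (simp add: zpow_def conjg_uminus)
qed

lemma add_eq_add_conjg: "a + h = h + conjg h a"
  by (simp add: conjg_def add.assoc)

lemma conjg_commuting: "commutes h x \<Longrightarrow> conjg h x = x"
proof -
  assume "commutes h x"
  then have "- h + x + h = - h + (h + x)"
    by (simp add: commutes_def add.assoc)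
  then show ?thesis
    by (simp add: conjg_def)
qed

lemma commutes_conjg: "commutes a b \<Longrightarrow> commutes (conjg h a) (conjg h b)"
  by (simp add: commutes_def conjg_add[symmetric])

lemma commutes_sym: "commutes a b \<Longrightarrow> commutes b a"
  by (simp add: commutes_def)

lemma commutes_zero: "commutes 0 c"
  by (simp add: commutes_def)

lemma commutes_add: "commutes a c \<Longrightarrow> commutes b c \<Longrightarrow> commutes (a + b) c"
  unfolding commutes_def
proof -
  assume ac: "a + c = c + a" and bc: "b + c = c + b"
  have "a + b + c = a + (c + b)"
    by (simp only: add.assoc bc)
  also have "\<dots> = c + (a + b)"
    by (simp only: add.assoc[symmetric] ac)
  finally show "a + b + c = c + (a + b)" .
qed

lemma commutes_uminus: "commutes a c \<Longrightarrow> commutes (- a) c"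
  unfolding commutes_def
proof -
  assume ac: "a + c = c + a"
  have "- a + c = - a + (c + a) + - a"
    by (simp add: add.assoc)
  also have "\<dots> = c + - a"
    by (simp add: ac[symmetric] add.assoc)
  finally show "- a + c = c + - a" .
qed

section \<open>Translations in the presented group\<close>

definition x1 :: tri_group where "x1 = abs_tri_group (xw 1)"
definition x2 :: tri_group where "x2 = abs_tri_group (xw 2)"
definition x3 :: tri_group where "x3 = abs_tri_group (xw 3)"

definition rot12 :: tri_group where "rot12 = x1 + x2"
definition rot13 :: tri_group where "rot13 = x1 + x3"

definition w_el :: tri_group where "w_el = abs_tri_group w_word"

definition g_el :: "int \<Rightarrow> int \<Rightarrow> tri_group" where
  "g_el n m = zpow rot12 n + zpow rot13 m"

definition t_el :: "int \<Rightarrow> int \<Rightarrow> tri_group" where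
  "t_el n m = conjg (g_el n m) w_el"

lemma generators_involutive [simp]: "x1 + x1 = 0" "x2 + x2 = 0" "x3 + x3 = 0"
  unfolding x1_def x2_def x3_def abs_tri_group_append[symmetric]
  by (simp_all add: abs_tri_group_relator tri_relators_def)

lemma generators_cancel [simp]: "x1 + (x1 + y) = y" "x2 + (x2 + y) = y" "x3 + (x3 + y) = y"
  by (simp_all only: add.assoc[symmetric] generators_involutive add_0_left)

lemma generators_uminus [simp]: "- x1 = x1" "- x2 = x2" "- x3 = x3"
  by (simp_all add: minus_unique)

lemma abs_tri_group_pow_word: "abs_tri_group (pow_word w n) = zpow (abs_tri_group w) n"
proof -
  have "abs_tri_group (concat (replicate k u)) = npow (abs_tri_group u) k" for k u
    by (induction k) (simp_all add: abs_tri_group_append abs_tri_group_Nil npow_commute)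
  then show ?thesis
    by (simp add: pow_word_def zpow_def abs_tri_group_inv_word npow_uminus)
qed

lemma w_el_letters: "w_el = x1 + x2 + x3 + x1 + x2 + x3"
  unfolding w_el_def w_word_def abs_tri_group_pow_word
  by (simp add: zpow_def numeral_2_eq_2 abs_tri_group_append x1_def x2_def x3_def add.assoc)

lemma w_el_eq_commutator: "w_el = rot12 + - rot13 + - rot12 + rot13"
  by (simp add: w_el_letters rot12_def rot13_def minus_add add.assoc)

lemma t_el_0_0: "t_el 0 0 = w_el"
  by (simp add: t_el_def g_el_def)

lemma commutes_w_el_t_el: "commutes w_el (t_el n m)"
proof (cases "(n, m) = (0, 0)")
  case True
  then show ?thesis
    by (simp add: t_el_0_0 commutes_def)
next
  case False
  then have "comm_word w_word (inv_word (g_word n m) @ w_word @ g_word n m) \<in> tri_relators"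
    unfolding tri_relators_def by blast
  moreover have "abs_tri_group (g_word n m) = g_el n m"
    by (simp add: g_word_def g_el_def rot12_def rot13_def abs_tri_group_append
        abs_tri_group_pow_word x1_def x2_def x3_def)
  ultimately have "w_el + t_el n m + - w_el + - t_el n m = 0"
    using abs_tri_group_relator
    by (fastforce simp: comm_word_def abs_tri_group_append abs_tri_group_inv_word t_el_def conjg_def
        w_el_def[symmetric] add.assoc)
  then have "w_el + t_el n m + - w_el + - t_el n m + t_el n m + w_el = t_el n m + w_el"
    by simp
  then show ?thesis
    unfolding commutes_def by (simp add: add.assoc)
qed

lemma t_el_conjg_rot13_pow: "conjg (zpow rot13 j) (t_el n m) = t_el n (m + j)"
  by (simp add: t_el_def conjg_conjg[symmetric] g_el_def zpow_add add.assoc)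

lemma commutes_t_el_0: "commutes (t_el 0 j) (t_el n l)"
proof -
  have "commutes (conjg (zpow rot13 j) w_el) (conjg (zpow rot13 j) (t_el n (l - j)))"
    by (rule commutes_conjg[OF commutes_w_el_t_el])
  moreover have "conjg (zpow rot13 j) w_el = t_el 0 j"
    by (simp add: t_el_def g_el_def)
  ultimately show ?thesis
    by (simp add: t_el_conjg_rot13_pow)
qed

type_synonym t_index = "int \<times> int \<times> bool"

definition t_signed :: "t_index \<Rightarrow> tri_group" where
  "t_signed k = (if snd (snd k) then t_el (fst k) (fst (snd k)) else - t_el (fst k) (fst (snd k)))"

definition t_prod :: "t_index list \<Rightarrow> tri_group" where
  "t_prod L = sum_list (map t_signed L)"

definition shift_idx :: "int \<Rightarrow> int \<Rightarrow> t_index list \<Rightarrow> t_index list" where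
  "shift_idx a b L = map (\<lambda>k. (fst k + a, fst (snd k) + b, snd (snd k))) L"

lemma t_prod_Nil [simp]: "t_prod [] = 0"
  by (simp add: t_prod_def)

lemma t_prod_Cons: "t_prod (k # L) = t_signed k + t_prod L"
  by (simp add: t_prod_def)

lemma t_prod_append: "t_prod (L1 @ L2) = t_prod L1 + t_prod L2"
  by (simp add: t_prod_def)

lemma t_prod_single: "t_prod [(p, q, True)] = t_el p q" "t_prod [(p, q, False)] = - t_el p q"
  by (simp_all add: t_prod_def t_signed_def)

lemma fst_set_shift_idx: "fst ` set (shift_idx 0 b L) = fst ` set L"
  by (force simp: shift_idx_def)

lemma conjg_t_prod:
  assumes "\<And>p q. conjg h (t_el p q) = t_el (p + a) (q + b)"
  shows "conjg h (t_prod L) = t_prod (shift_idx a b L)"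
  by (induction L) (simp_all add: shift_idx_def t_prod_Cons conjg_add t_signed_def conjg_uminus assms)

lemma conjg_rot13_pow_t_prod: "conjg (zpow rot13 j) (t_prod L) = t_prod (shift_idx 0 j L)"
  by (rule conjg_t_prod) (simp add: t_el_conjg_rot13_pow)

lemma commutes_t_prod_t_el_0: "fst ` set L \<subseteq> {0} \<Longrightarrow> commutes (t_prod L) (t_el i j)"
proof (induction L)
  case (Cons k L)
  have "commutes (t_signed k) (t_el i j)"
    using Cons(2) commutes_t_el_0[of "fst (snd k)" i j] commutes_uminus by (auto simp: t_signed_def)
  with Cons show ?case
    by (simp add: t_prod_Cons commutes_add)
qed (simp add: commutes_zero)

lemma zpow_rot13_swap:
  assumes swap: "rot13 + x = x + rot13 + t_prod L1"
    and swap_inv: "- rot13 + x = x + - rot13 + t_prod L2"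
  shows "\<exists>L. fst ` set L \<subseteq> fst ` set (L1 @ L2) \<and> zpow rot13 j + x = x + zpow rot13 j + t_prod L"
proof (induction j rule: int_induct[where k = 0])
  case base
  show ?case
    by (intro exI[of _ "[]"]) simp
next
  case (step1 i)
  then obtain L where L: "fst ` set L \<subseteq> fst ` set (L1 @ L2)"
    and swap_i: "zpow rot13 i + x = x + zpow rot13 i + t_prod L"
    by blast
  have "zpow rot13 (i + 1) + x = (zpow rot13 i + x) + rot13 + t_prod L1"
    by (simp add: zpow_add_1 swap add.assoc)
  also have "\<dots> = x + zpow rot13 (i + 1) + t_prod (shift_idx 0 1 L @ L1)"
    by (simp add: swap_i add_eq_add_conjg[of "t_prod L" rot13] conjg_rot13_pow_t_prod[of 1, simplified]
        zpow_add_1 t_prod_append add.assoc)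
  finally show ?case
    using L by (intro exI[of _ "shift_idx 0 1 L @ L1"]) (auto simp: image_Un fst_set_shift_idx)
next
  case (step2 i)
  then obtain L where L: "fst ` set L \<subseteq> fst ` set (L1 @ L2)"
    and swap_i: "zpow rot13 i + x = x + zpow rot13 i + t_prod L"
    by blast
  have "zpow rot13 (i - 1) + x = (zpow rot13 i + x) + - rot13 + t_prod L2"
    by (simp add: zpow_diff_1 swap_inv add.assoc)
  also have "\<dots> = x + zpow rot13 (i - 1) + t_prod (shift_idx 0 (- 1) L @ L2)"
    by (simp add: swap_i add_eq_add_conjg[of "t_prod L" "- rot13"] conjg_rot13_pow_t_prod[of "- 1", simplified]
        zpow_diff_1 t_prod_append add.assoc)
  finally show ?case
    using L by (intro exI[of _ "shift_idx 0 (- 1) L @ L2"]) (auto simp: image_Un fst_set_shift_idx)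
qed

lemma zpow_rot13_swap_rot12_inv:
  "\<exists>L. fst ` set L \<subseteq> {0} \<and> zpow rot13 j + - rot12 = - rot12 + zpow rot13 j + t_prod L"
proof -
  have "rot13 + - rot12 = - rot12 + rot13 + t_prod [(0, 0, False)]"
    "- rot13 + - rot12 = - rot12 + - rot13 + t_prod [(0, - 1, True)]"
    by (simp_all add: t_prod_single t_el_def g_el_def conjg_def w_el_eq_commutator minus_add add.assoc)
  from zpow_rot13_swap[OF this] show ?thesis
    by simp
qed

lemma zpow_rot13_swap_rot12: "\<exists>L. zpow rot13 j + rot12 = rot12 + zpow rot13 j + t_prod L"
proof -
  have "rot13 + rot12 = rot12 + rot13 + t_prod [(1, 0, True)]"
    "- rot13 + rot12 = rot12 + - rot13 + t_prod [(1, - 1, False)]"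
    by (simp_all add: t_prod_single t_el_def g_el_def conjg_def w_el_eq_commutator minus_add add.assoc)
  from zpow_rot13_swap[OF this] show ?thesis
    by blast
qed

lemma t_el_conjg_rot12: "conjg rot12 (t_el i j) = t_el (i + 1) j"
proof -
  obtain L where L: "fst ` set L \<subseteq> {0}" "zpow rot13 j + - rot12 = - rot12 + zpow rot13 j + t_prod L"
    using zpow_rot13_swap_rot12_inv by blast
  have "g_el (i + 1) j + - rot12 = g_el i j + t_prod L"
    by (simp add: L(2) g_el_def zpow_add_1 add.assoc)
  then have "conjg (- rot12) (t_el (i + 1) j) = conjg (t_prod L) (t_el i j)"
    by (simp add: t_el_def conjg_conjg[symmetric])
  also have "\<dots> = t_el i j"
    by (rule conjg_commuting[OF commutes_t_prod_t_el_0[OF L(1)]])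
  finally show ?thesis
    by (metis conjg_conjg add.right_inverse conjg_by_zero)
qed

lemma t_el_conjg_rot12_pow: "conjg (zpow rot12 k) (t_el i j) = t_el (i + k) j"
proof (induction k rule: int_induct[where k = 0])
  case (step1 k)
  then show ?case
    by (simp add: zpow_add_1 conjg_conjg t_el_conjg_rot12 add.assoc)
next
  case (step2 k)
  have "conjg (zpow rot12 (k - 1)) (t_el i j) = conjg (- rot12) (conjg rot12 (t_el (i + k - 1) j))"
    by (simp add: zpow_diff_1 conjg_conjg step2 t_el_conjg_rot12)
  also have "\<dots> = t_el (i + (k - 1)) j"
    by (simp add: conjg_conjg[symmetric] algebra_simps)
  finally show ?case .
qed simp

lemma commutes_t_el: "commutes (t_el i j) (t_el k l)"
proof -
  have "commutes (conjg (zpow rot12 i) (t_el 0 j)) (conjg (zpow rot12 i) (t_el (k - i) l))"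
    by (rule commutes_conjg[OF commutes_t_el_0])
  then show ?thesis
    by (simp add: t_el_conjg_rot12_pow)
qed

lemma commutes_t_prod_t_el: "commutes (t_prod L) (t_el i j)"
proof (induction L)
  case (Cons k L)
  have "commutes (t_signed k) (t_el i j)"
    by (cases "snd (snd k)") (simp_all add: t_signed_def commutes_t_el commutes_uminus)
  with Cons show ?case
    by (simp add: t_prod_Cons commutes_add)
qed (simp add: commutes_zero)

lemma conjg_rot12_pow_t_prod: "conjg (zpow rot12 k) (t_prod L) = t_prod (shift_idx k 0 L)"
  by (rule conjg_t_prod) (simp add: t_el_conjg_rot12_pow)

lemma conjg_g_el_t_prod_w_el: "conjg (g_el i j + t_prod L) w_el = t_el i j"
  by (simp add: conjg_conjg t_el_def[symmetric] conjg_commuting[OF commutes_t_prod_t_el])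

lemma zpow_rot13_swap_zpow_rot12: "\<exists>L. zpow rot13 j + zpow rot12 k = zpow rot12 k + zpow rot13 j + t_prod L"
proof (induction k rule: int_induct[where k = 0])
  case base
  show ?case
    by (intro exI[of _ "[]"]) simp
next
  case (step1 i)
  then obtain L where L: "zpow rot13 j + zpow rot12 i = zpow rot12 i + zpow rot13 j + t_prod L"
    by blast
  obtain L' where L': "zpow rot13 j + rot12 = rot12 + zpow rot13 j + t_prod L'"
    using zpow_rot13_swap_rot12 by blast
  have "zpow rot13 j + zpow rot12 (i + 1) = zpow rot12 i + zpow rot13 j + (t_prod L + rot12)"
    by (simp only: zpow_add_1 add.assoc[symmetric] L)
  also have "\<dots> = zpow rot12 i + (zpow rot13 j + rot12) + t_prod (shift_idx 1 0 L)"
    by (simp add: add_eq_add_conjg[of "t_prod L" rot12] conjg_rot12_pow_t_prod[of 1, simplified] add.assoc)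
  also have "\<dots> = zpow rot12 (i + 1) + zpow rot13 j + t_prod (L' @ shift_idx 1 0 L)"
    by (simp add: L' zpow_add_1 t_prod_append add.assoc)
  finally show ?case
    by blast
next
  case (step2 i)
  then obtain L where L: "zpow rot13 j + zpow rot12 i = zpow rot12 i + zpow rot13 j + t_prod L"
    by blast
  obtain L' where L': "zpow rot13 j + - rot12 = - rot12 + zpow rot13 j + t_prod L'"
    using zpow_rot13_swap_rot12_inv by blast
  have "zpow rot13 j + zpow rot12 (i - 1) = zpow rot12 i + zpow rot13 j + (t_prod L + - rot12)"
    by (simp only: zpow_diff_1 add.assoc[symmetric] L)
  also have "\<dots> = zpow rot12 i + (zpow rot13 j + - rot12) + t_prod (shift_idx (- 1) 0 L)"
    by (simp add: add_eq_add_conjg[of "t_prod L" "- rot12"] conjg_rot12_pow_t_prod[of "- 1", simplified] add.assoc)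
  also have "\<dots> = zpow rot12 (i - 1) + zpow rot13 j + t_prod (L' @ shift_idx (- 1) 0 L)"
    by (simp add: L' zpow_diff_1 t_prod_append add.assoc)
  finally show ?case
    by blast
qed

lemma conjg_x1_rot12: "conjg x1 rot12 = - rot12"
  by (simp add: conjg_def rot12_def minus_add add.assoc)

lemma conjg_x1_rot13: "conjg x1 rot13 = - rot13"
  by (simp add: conjg_def rot13_def minus_add add.assoc)

lemma conjg_x1_t_el: "conjg x1 (t_el p q) = t_el (1 - p) (- 1 - q)"
proof -
  have x1_w_el: "conjg x1 w_el = conjg (- rot13 + rot12) w_el"
    by (simp add: conjg_def w_el_letters rot12_def rot13_def minus_add add.assoc)
  have x1_g_el: "conjg x1 (g_el p q) = g_el (- p) (- q)"
    by (simp add: g_el_def conjg_add conjg_zpow conjg_x1_rot12 conjg_x1_rot13 zpow_uminus)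
  have pow12: "zpow rot12 (1 - p) = rot12 + zpow rot12 (- p)"
    using zpow_add[of rot12 1 "- p"] by (simp only: diff_conv_add_uminus zpow_1)
  have pow13: "zpow rot13 (- 1 - q) = zpow rot13 (- 1) + zpow rot13 (- q)"
    using zpow_add[of rot13 "- 1" "- q"] by (simp only: diff_conv_add_uminus)
  have "conjg x1 (t_el p q) = conjg (g_el p q + x1) w_el"
    by (simp add: t_el_def conjg_conjg)
  also have "\<dots> = conjg (x1 + g_el (- p) (- q)) w_el"
    by (simp add: add_eq_add_conjg[of "g_el p q" x1] x1_g_el)
  also have "\<dots> = conjg (zpow rot13 (- 1) + zpow rot12 (1 - p) + zpow rot13 (- q)) w_el"
    by (simp add: conjg_conjg x1_w_el g_el_def pow12 add.assoc)
  finally have x1_t_el: "conjg x1 (t_el p q) = conjg (zpow rot13 (- 1) + zpow rot12 (1 - p) + zpow rot13 (- q)) w_el" .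
  obtain L where L: "zpow rot13 (- 1) + zpow rot12 (1 - p) = zpow rot12 (1 - p) + zpow rot13 (- 1) + t_prod L"
    using zpow_rot13_swap_zpow_rot12 by blast
  have "zpow rot13 (- 1) + zpow rot12 (1 - p) + zpow rot13 (- q) =
      zpow rot12 (1 - p) + zpow rot13 (- 1) + (t_prod L + zpow rot13 (- q))"
    by (simp only: L add.assoc)
  also have "\<dots> = g_el (1 - p) (- 1 - q) + t_prod (shift_idx 0 (- q) L)"
    by (simp add: add_eq_add_conjg[of "t_prod L" "zpow rot13 (- q)"] conjg_rot13_pow_t_prod g_el_def pow13 add.assoc)
  finally show ?thesis
    using x1_t_el conjg_g_el_t_prod_w_el by simp
qed

lemma conjg_x1_t_prod: "conjg x1 (t_prod L) = t_prod (map (\<lambda>k. (1 - fst k, - 1 - fst (snd k), snd (snd k))) L)"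
  by (induction L) (simp_all add: t_prod_Cons conjg_add t_signed_def conjg_uminus conjg_x1_t_el)

definition normal_form :: "bool \<Rightarrow> int \<Rightarrow> int \<Rightarrow> t_index list \<Rightarrow> tri_group" where
  "normal_form s n m L = (if s then x1 else 0) + zpow rot12 n + zpow rot13 m + t_prod L"

lemma normal_form_add_x1: "\<exists>s' n' m' L'. normal_form s n m L + x1 = normal_form s' n' m' L'"
proof -
  have "normal_form s n m L + x1 = (if s then x1 else 0) + (zpow rot12 n + zpow rot13 m + x1) + conjg x1 (t_prod L)"
    by (simp add: normal_form_def add_eq_add_conjg[of "t_prod L" x1] add.assoc)
  also have "zpow rot12 n + zpow rot13 m + x1 = x1 + conjg x1 (zpow rot12 n + zpow rot13 m)"
    by (rule add_eq_add_conjg)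
  also have "conjg x1 (zpow rot12 n + zpow rot13 m) = zpow rot12 (- n) + zpow rot13 (- m)"
    by (simp add: conjg_add conjg_zpow conjg_x1_rot12 conjg_x1_rot13 zpow_uminus)
  finally have "normal_form s n m L + x1 =
      ((if s then x1 else 0) + x1) + zpow rot12 (- n) + zpow rot13 (- m) + conjg x1 (t_prod L)"
    by (simp add: add.assoc)
  also have "(if s then x1 else 0) + x1 = (if \<not> s then x1 else 0)"
    by simp
  finally show ?thesis
    unfolding conjg_x1_t_prod normal_form_def by blast
qed

lemma normal_form_add_rot12: "\<exists>L'. normal_form s n m L + rot12 = normal_form s (n + 1) m L'"
proof -
  obtain L1 where L1: "zpow rot13 m + rot12 = rot12 + zpow rot13 m + t_prod L1"
    using zpow_rot13_swap_rot12 by blast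
  have "normal_form s n m L + rot12 =
      (if s then x1 else 0) + zpow rot12 n + (zpow rot13 m + rot12) + t_prod (shift_idx 1 0 L)"
    by (simp add: normal_form_def add_eq_add_conjg[of "t_prod L" rot12]
        conjg_rot12_pow_t_prod[of 1, simplified] add.assoc)
  also have "\<dots> = normal_form s (n + 1) m (L1 @ shift_idx 1 0 L)"
    by (simp add: normal_form_def L1 zpow_add_1 t_prod_append add.assoc)
  finally show ?thesis
    by blast
qed

lemma normal_form_add_rot13: "normal_form s n m L + rot13 = normal_form s n (m + 1) (shift_idx 0 1 L)"
  by (simp add: normal_form_def add_eq_add_conjg[of "t_prod L" rot13]
      conjg_rot13_pow_t_prod[of 1, simplified] zpow_add_1 add.assoc)

lemma normal_form_add_generator:
  assumes "y \<in> {x1, x2, x3}"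
  shows "\<exists>s' n' m' L'. normal_form s n m L + y = normal_form s' n' m' L'"
proof -
  obtain s' n' m' L' where x1: "normal_form s n m L + x1 = normal_form s' n' m' L'"
    using normal_form_add_x1 by blast
  have "y = x1 \<or> y = x1 + rot12 \<or> y = x1 + rot13"
    using assms by (auto simp: rot12_def rot13_def)
  then show ?thesis
    using x1 normal_form_add_rot12[of s' n' m' L'] normal_form_add_rot13[of s' n' m' L']
    by (auto simp: add.assoc[symmetric]; blast)
qed

lemma abs_tri_group_letter: "fst l \<in> {1, 2, 3} \<Longrightarrow> abs_tri_group [l] \<in> {x1, x2, x3}"
proof -
  assume l: "fst l \<in> {1, 2, 3}"
  obtain i b where l_eq: "l = (i, b)"
    by force
  have "[(i, True)] = inv_word (xw i)" "[(i, False)] = xw i"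
    by (simp_all add: inv_word_def xw_def inv_letter_def)
  then have "abs_tri_group [l] = abs_tri_group (xw i) \<or> abs_tri_group [l] = - abs_tri_group (xw i)"
    unfolding l_eq by (cases b) (simp_all add: abs_tri_group_inv_word)
  moreover have "i = 1 \<or> i = 2 \<or> i = 3"
    using l l_eq by auto
  ultimately show ?thesis
    using generators_uminus unfolding x1_def x2_def x3_def by auto
qed

lemma normal_form_exists: "set (map fst w) \<subseteq> {1, 2, 3} \<Longrightarrow> \<exists>s n m L. abs_tri_group w = normal_form s n m L"
proof (induction w rule: rev_induct)
  case Nil
  have "abs_tri_group [] = normal_form False 0 0 []"
    by (simp add: normal_form_def abs_tri_group_Nil)
  then show ?case
    by blast
next
  case (snoc l w)
  then obtain s n m L where "abs_tri_group w = normal_form s n m L"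
    by auto
  moreover have "abs_tri_group [l] \<in> {x1, x2, x3}"
    using snoc(2) by (intro abs_tri_group_letter) auto
  ultimately show ?case
    using normal_form_add_generator by (simp add: abs_tri_group_append)
qed

definition t_sign :: "t_index \<Rightarrow> int" where
  "t_sign k = (if snd (snd k) then 1 else - 1)"

definition t_idx :: "t_index \<Rightarrow> int \<times> int" where
  "t_idx k = (fst k, fst (snd k))"

definition exp_sum :: "t_index list \<Rightarrow> int \<times> int \<Rightarrow> int" where
  "exp_sum L e = sum_list (map (\<lambda>k. if t_idx k = e then t_sign k else 0) L)"

lemma exp_sum_Cons: "exp_sum (k # L) e = (if t_idx k = e then t_sign k else 0) + exp_sum L e"
  by (simp add: exp_sum_def)

lemma exp_sum_append: "exp_sum (L1 @ L2) e = exp_sum L1 e + exp_sum L2 e"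
  by (simp add: exp_sum_def)

lemma exp_sum_outside: "e \<notin> t_idx ` set L \<Longrightarrow> exp_sum L e = 0"
  by (induction L) (auto simp: exp_sum_def)

lemma sum_list_t_sign_eq_exp_sum:
  fixes F :: "int \<times> int \<Rightarrow> 'a::comm_ring_1"
  shows "sum_list (map (\<lambda>k. of_int (t_sign k) * F (t_idx k)) L) =
    (\<Sum>e\<in>t_idx ` set L. of_int (exp_sum L e) * F e)"
proof (induction L)
  case (Cons k L)
  let ?I = "insert (t_idx k) (t_idx ` set L)"
  have "(\<Sum>e\<in>t_idx ` set (k # L). of_int (exp_sum (k # L) e) * F e)
      = (\<Sum>e\<in>?I. (if t_idx k = e then of_int (t_sign k) * F e else 0) + of_int (exp_sum L e) * F e)"
    by (rule sum.cong) (auto simp: exp_sum_Cons distrib_right)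
  also have "\<dots> = (\<Sum>e\<in>?I. if t_idx k = e then of_int (t_sign k) * F e else 0)
      + (\<Sum>e\<in>?I. of_int (exp_sum L e) * F e)"
    by (rule sum.distrib)
  also have "\<dots> = of_int (t_sign k) * F (t_idx k) + (\<Sum>e\<in>t_idx ` set L. of_int (exp_sum L e) * F e)"
    using exp_sum_outside[of _ L] by (simp add: sum.delta sum.insert_if)
  finally show ?case
    using Cons by simp
qed simp

lemma exp_sum_opposite_exists:
  assumes "exp_sum L (t_idx k) = - t_sign k"
  shows "\<exists>k'\<in>set L. t_idx k' = t_idx k \<and> snd (snd k') = (\<not> snd (snd k))"
proof (rule ccontr)
  assume "\<not> ?thesis"
  then have "\<forall>k'\<in>set L. t_idx k' = t_idx k \<longrightarrow> snd (snd k') = snd (snd k)"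
    by blast
  then have "if snd (snd k) then exp_sum L (t_idx k) \<ge> 0 else exp_sum L (t_idx k) \<le> 0"
    by (induction L) (auto simp: exp_sum_def t_sign_def split: if_splits)
  with assms show False
    by (auto simp: t_sign_def split: if_splits)
qed

lemma t_prod_cancel:
  assumes "t_signed k' = - t_signed k"
  shows "t_prod (k # L1 @ k' # L2) = t_prod (L1 @ L2)"
proof -
  have "commutes (t_signed k) (t_prod L1)"
    by (cases "snd (snd k)")
       (simp_all add: t_signed_def commutes_sym[OF commutes_t_prod_t_el] commutes_uminus)
  then have "t_signed k + t_prod L1 + - t_signed k = t_prod L1"
    by (simp add: commutes_def add.assoc)
  then show ?thesis
    using assms by (simp add: t_prod_Cons t_prod_append add.assoc[symmetric])
qed

lemma t_prod_eq_0: "(\<forall>e. exp_sum L e = 0) \<Longrightarrow> t_prod L = 0"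
proof (induction L rule: length_induct)
  case (1 L)
  show ?case
  proof (cases L)
    case (Cons k L')
    have "exp_sum L (t_idx k) = 0"
      using 1(2) by blast
    then have "exp_sum L' (t_idx k) = - t_sign k"
      using Cons by (simp add: exp_sum_Cons add_eq_0_iff)
    then obtain k' where k': "k' \<in> set L'" "t_idx k' = t_idx k" "snd (snd k') = (\<not> snd (snd k))"
      using exp_sum_opposite_exists by blast
    obtain L1 L2 where L': "L' = L1 @ k' # L2"
      using split_list[OF k'(1)] by blast
    have "t_signed k' = - t_signed k" "t_sign k' = - t_sign k"
      using k'(2,3) by (auto simp: t_signed_def t_sign_def t_idx_def)
    then have "t_prod L = t_prod (L1 @ L2)" and "\<forall>e. exp_sum (L1 @ L2) e = 0"
      using t_prod_cancel 1(2) k'(2) unfolding Cons L'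
      by (auto simp: exp_sum_Cons exp_sum_append split: if_splits)
    moreover have "length (L1 @ L2) < length L"
      using Cons L' by simp
    ultimately show ?thesis
      using 1(1) by metis
  qed simp
qed

declare add_uminus_conv_diff [simp]

definition aff_map :: "bool \<Rightarrow> complex \<Rightarrow> complex \<Rightarrow> complex \<Rightarrow> complex" where
  "aff_map b l m z = l * (if b then cnj z else z) + m"

lemma aff_map_comp: "aff_map b2 l2 m2 \<circ> aff_map b1 l1 m1 =
    aff_map (b1 \<noteq> b2) (l2 * (if b2 then cnj l1 else l1)) (l2 * (if b2 then cnj m1 else m1) + m2)"
  by (rule ext) (cases b1; cases b2; simp add: aff_map_def algebra_simps)

lemma aff_map_True_neq_id: "aff_map True l m \<noteq> id"
proof
  assume "aff_map True l m = id"
  then have "aff_map True l m 0 = 0" "aff_map True l m 1 = 1" "aff_map True l m \<i> = \<i>"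
    by simp_all
  then show False
    by (simp add: aff_map_def complex_eq_iff)
qed

lemma aff_map_False_eq_id: "aff_map False l m = id \<Longrightarrow> l = 1 \<and> m = 0"
proof -
  assume "aff_map False l m = id"
  then have "aff_map False l m 0 = 0" "aff_map False l m 1 = 1"
    by simp_all
  then show ?thesis
    by (simp add: aff_map_def)
qed

lemma aff_map_add: "aff_map b l m (x + t) = aff_map b l m x + l * (if b then cnj t else t)"
  by (simp add: aff_map_def algebra_simps)

lemma refl_line_aff_map: "refl_line a b = aff_map True (line_dir a b) (a - line_dir a b * cnj a)"
proof
  fix z
  have "a + line_dir a b * cnj (z - a) = line_dir a b * cnj z + (a - line_dir a b * cnj a)"
    by (simp add: algebra_simps)
  then show "refl_line a b z = aff_map True (line_dir a b) (a - line_dir a b * cnj a) z"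
    by (simp only: refl_line_def aff_map_def line_dir_def[symmetric] if_True)
qed

lemma line_dir_unit: "a \<noteq> b \<Longrightarrow> line_dir a b * cnj (line_dir a b) = 1"
  by (simp add: line_dir_def)

lemma refl_line_involutive: "a \<noteq> b \<Longrightarrow> refl_line a b (refl_line a b z) = z"
  using line_dir_unit[of a b]
  by (simp add: refl_line_def line_dir_def[symmetric] mult.assoc[symmetric])

lemma eval_word_append: "eval_word g (u @ v) = eval_word g v \<circ> eval_word g u"
  by (induction u) auto

definition tri_dir :: "complex \<Rightarrow> complex \<Rightarrow> complex \<Rightarrow> nat \<Rightarrow> complex" where
  "tri_dir A1 A2 A3 i =
     (if i = 1 then line_dir A2 A3 else if i = 2 then line_dir A3 A1 else line_dir A1 A2)"

lemma tri_refl_aff_map: "\<exists>m. tri_refl A1 A2 A3 i = aff_map True (tri_dir A1 A2 A3 i) m"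
  by (auto simp: tri_refl_def tri_dir_def refl_line_aff_map)

section \<open>The relators hold in the triangle group\<close>

definition transl :: "complex \<Rightarrow> complex \<Rightarrow> complex" where
  "transl t z = z + t"

locale nondegenerate_tri =
  fixes A1 A2 A3 :: complex
  assumes nd: "nondegenerate_triangle A1 A2 A3"
begin

abbreviation r :: "nat \<Rightarrow> complex \<Rightarrow> complex" where
  "r \<equiv> tri_refl A1 A2 A3"

lemma tri_dir_unit: "cmod (tri_dir A1 A2 A3 i) = 1"
  using nondegenerate_triangle_distinct[OF nd]
  by (auto simp: tri_dir_def line_dir_def norm_divide simp del: complex_cnj_diff)

lemma tri_refl_involutive: "r i (r i z) = z"
  using nondegenerate_triangle_distinct[OF nd] by (simp add: tri_refl_def refl_line_involutive)

lemma inv_tri_refl [simp]: "inv (r i) = r i"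
  by (rule inv_unique_comp) (auto simp: tri_refl_involutive)

lemma eval_word_Cons_tri_refl: "eval_word r (l # w) = eval_word r w \<circ> r (fst l)"
  by simp

lemma eval_word_aff_map: "\<exists>l m. cmod l = 1 \<and> eval_word r w = aff_map (odd (length w)) l m"
proof (induction w)
  case Nil
  show ?case
    by (intro exI[of _ 1] exI[of _ 0]) (auto simp: aff_map_def fun_eq_iff)
next
  case (Cons a w)
  define d where "d = tri_dir A1 A2 A3 (fst a)"
  obtain l m where l: "cmod l = 1" and w: "eval_word r w = aff_map (odd (length w)) l m"
    using Cons by blast
  obtain m' where a: "r (fst a) = aff_map True d m'"
    using tri_refl_aff_map unfolding d_def by blast
  have "eval_word r (a # w) = aff_map (odd (length (a # w)))
      (l * (if odd (length w) then cnj d else d)) (l * (if odd (length w) then cnj m' else m') + m)"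
    unfolding eval_word_Cons_tri_refl w a aff_map_comp by simp
  moreover have "cmod (l * (if odd (length w) then cnj d else d)) = 1"
    using tri_dir_unit l by (simp add: d_def norm_mult)
  ultimately show ?case
    by blast
qed

lemma eval_word_inv_word_append: "eval_word r (inv_word w @ w) = id"
proof (induction w)
  case (Cons a w)
  have "eval_word r (inv_word (a # w) @ a # w) = eval_word r w \<circ> (r (fst a) \<circ> r (fst a)) \<circ> eval_word r (inv_word w)"
    by (simp add: inv_word_Cons eval_word_append inv_letter_def o_assoc)
  also have "r (fst a) \<circ> r (fst a) = id"
    by (rule ext) (simp add: tri_refl_involutive)
  finally show ?case
    using Cons by (simp add: eval_word_append)
qed simp

lemma eval_w_word_translation: "\<exists>t. eval_word r w_word = transl t"
proof -
  have w: "w_word = [(1, False), (2, False), (3, False)] @ [(1, False), (2, False), (3, False)]"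
    by (simp add: w_word_def pow_word_def xw_def numeral_2_eq_2)
  obtain l m where "cmod l = 1" and half: "eval_word r [(1, False), (2, False), (3, False)] = aff_map True l m"
    using eval_word_aff_map[of "[(1, False), (2, False), (3, False)]"] by auto
  then have "l * cnj l = 1"
    by (simp add: complex_norm_square[symmetric])
  then have "eval_word r w_word = transl (l * cnj m + m)"
    unfolding w eval_word_append half aff_map_comp by (intro ext) (simp add: aff_map_def transl_def)
  then show ?thesis
    by blast
qed

lemma eval_word_conj_translation:
  assumes "eval_word r w = transl t"
  shows "\<exists>t'. eval_word r (inv_word g @ w @ g) = transl t'"
proof -
  obtain l m where g: "eval_word r g = aff_map (odd (length g)) l m"
    using eval_word_aff_map by blast
  have inv: "eval_word r g (eval_word r (inv_word g) z) = z" for z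
    using eval_word_inv_word_append[of g] unfolding eval_word_append by (metis comp_apply id_apply)
  have "eval_word r (inv_word g @ w @ g) z = z + l * (if odd (length g) then cnj t else t)" for z
    using inv[of z] by (simp add: eval_word_append assms transl_def g aff_map_add)
  then show ?thesis
    unfolding transl_def by (intro exI ext)
qed

lemma eval_word_inv_translation: "eval_word r w = transl t \<Longrightarrow> eval_word r (inv_word w) = transl (- t)"
proof -
  assume "eval_word r w = transl t"
  moreover have "eval_word r w (eval_word r (inv_word w) z) = z" for z
    using eval_word_inv_word_append[of w] unfolding eval_word_append by (metis comp_apply id_apply)
  ultimately show ?thesis
    by (intro ext) (simp add: transl_def eq_diff_eq)
qed

lemma eval_comm_word_translations:
  "eval_word r x = transl s \<Longrightarrow> eval_word r y = transl t \<Longrightarrow> eval_word r (comm_word x y) = id"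
  by (auto simp: comm_word_def eval_word_append eval_word_inv_translation transl_def fun_eq_iff)

lemma eval_word_relator: "x \<in> tri_relators \<Longrightarrow> eval_word r x = id"
proof -
  assume "x \<in> tri_relators"
  then consider (square) i where "x = xw i @ xw i"
    | (commutator) n m where "x = comm_word w_word (inv_word (g_word n m) @ w_word @ g_word n m)"
    unfolding tri_relators_def by blast
  then show ?thesis
  proof cases
    case square
    then show ?thesis
      by (intro ext) (simp add: xw_def eval_word_append tri_refl_involutive)
  next
    case commutator
    obtain t where t: "eval_word r w_word = transl t"
      using eval_w_word_translation by blast
    obtain t' where t': "eval_word r (inv_word (g_word n m) @ w_word @ g_word n m) = transl t'"
      using eval_word_conj_translation[OF t] by blast
    show ?thesis
      unfolding commutator by (rule eval_comm_word_translations[OF t t'])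
  qed
qed

lemma eval_word_word_step: "word_step tri_relators x y \<Longrightarrow> eval_word r x = eval_word r y"
proof (induction rule: word_step.induct)
  case (cancel u v a)
  have "eval_word r [a, inv_letter a] = id"
    by (intro ext) (simp del: eval_word.simps
        add: eval_word.simps(1) eval_word_Cons_tri_refl inv_letter_def tri_refl_involutive)
  then show ?case
    by (simp only: eval_word_append o_id)
next
  case (relator r u v)
  then show ?case
    by (simp add: eval_word_append eval_word_relator)
qed

lemma eval_word_word_equiv: "word_equiv tri_relators x y \<Longrightarrow> eval_word r x = eval_word r y"
  unfolding word_equiv_def by (induction rule: rtranclp_induct) (auto dest: eval_word_word_step)

section \<open>Faithfulness on the normal forms\<close>

definition eval_tg :: "tri_group \<Rightarrow> complex \<Rightarrow> complex" where
  "eval_tg x = eval_word r (rep_tri_group x)"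

lemma eval_tg_abs: "eval_tg (abs_tri_group w) = eval_word r w"
proof -
  have "word_equiv tri_relators (rep_tri_group (abs_tri_group w)) w"
    by (rule Quotient3_rep_abs[OF Quotient3_tri_group]) (rule word_equiv_refl)
  then show ?thesis
    unfolding eval_tg_def by (rule eval_word_word_equiv)
qed

lemma eval_tg_add: "eval_tg (x + y) = eval_tg y \<circ> eval_tg x"
proof -
  have "x + y = abs_tri_group (rep_tri_group x @ rep_tri_group y)"
    by (metis Quotient3_abs_rep[OF Quotient3_tri_group] abs_tri_group_append)
  then have "eval_tg (x + y) = eval_word r (rep_tri_group x @ rep_tri_group y)"
    by (simp add: eval_tg_abs)
  then show ?thesis
    by (simp add: eval_word_append eval_tg_def)
qed

lemma eval_tg_zero: "eval_tg 0 = id"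
  using eval_tg_abs[of "[]"] by (simp add: abs_tri_group_Nil)

lemma eval_tg_generators: "eval_tg x1 = r 1" "eval_tg x2 = r 2" "eval_tg x3 = r 3"
  by (simp_all add: x1_def x2_def x3_def eval_tg_abs xw_def)

lemma eval_tg_uminus: "eval_tg x = aff_map False l m \<Longrightarrow> l \<noteq> 0 \<Longrightarrow> eval_tg (- x) = aff_map False (inverse l) (- m / l)"
proof -
  assume x: "eval_tg x = aff_map False l m" and "l \<noteq> 0"
  have "(eval_tg x \<circ> eval_tg (- x)) z = z" for z
    using eval_tg_add[of "- x" x] by (simp add: eval_tg_zero)
  then have "l * eval_tg (- x) z + m = z" for z
    using x by (simp add: aff_map_def)
  with \<open>l \<noteq> 0\<close> show ?thesis
    by (intro ext) (simp add: aff_map_def field_simps)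
qed

lemma eval_tg_zpow:
  assumes y: "eval_tg y = aff_map False l c" and "l \<noteq> 0"
  shows "\<exists>m. eval_tg (zpow y n) = aff_map False (l powi n) m"
proof (induction n rule: int_induct[where k = 0])
  case base
  then show ?case
    by (intro exI[of _ 0]) (auto simp: eval_tg_zero aff_map_def fun_eq_iff)
next
  case (step1 i)
  then obtain m where "eval_tg (zpow y i) = aff_map False (l powi i) m"
    by blast
  then have "eval_tg (zpow y (i + 1)) = aff_map False (l powi (i + 1)) (l * m + c)"
    using \<open>l \<noteq> 0\<close> by (simp add: zpow_add_1 eval_tg_add y aff_map_comp power_int_add mult.commute)
  then show ?case
    by blast
next
  case (step2 i)
  then obtain m where m: "eval_tg (zpow y i) = aff_map False (l powi i) m"
    by blast
  have "eval_tg (zpow y (i - 1)) = aff_map False (inverse l) (- c / l) \<circ> aff_map False (l powi i) m"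
    by (simp only: zpow_diff_1 eval_tg_add eval_tg_uminus[OF y \<open>l \<noteq> 0\<close>] m)
  also have "\<dots> = aff_map False (l powi (i - 1)) (inverse l * m + - c / l)"
    using \<open>l \<noteq> 0\<close> by (simp add: aff_map_comp power_int_diff field_simps)
  finally show ?case
    by blast
qed

definition lam12 :: complex where
  "lam12 = line_dir A3 A1 * cnj (line_dir A2 A3)"

definition lam13 :: complex where
  "lam13 = line_dir A1 A2 * cnj (line_dir A2 A3)"

lemma lam_nonzero: "lam12 \<noteq> 0" "lam13 \<noteq> 0"
  using tri_dir_unit[of 1] tri_dir_unit[of 2] tri_dir_unit[of 3] by (auto simp: tri_dir_def lam12_def lam13_def)

lemma eval_tg_rotation:
  assumes "r i = aff_map True (tri_dir A1 A2 A3 i) m" "r j = aff_map True (tri_dir A1 A2 A3 j) m'"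
    and "r i P = P" "r j P = P"
  shows "eval_tg (abs_tri_group (xw i @ xw j)) =
    aff_map False (tri_dir A1 A2 A3 j * cnj (tri_dir A1 A2 A3 i)) ((1 - tri_dir A1 A2 A3 j * cnj (tri_dir A1 A2 A3 i)) * P)"
proof -
  let ?l = "tri_dir A1 A2 A3 j * cnj (tri_dir A1 A2 A3 i)"
  have rot: "eval_tg (abs_tri_group (xw i @ xw j)) = aff_map False ?l (tri_dir A1 A2 A3 j * cnj m + m')"
    by (simp add: eval_tg_abs xw_def assms(1,2) aff_map_comp)
  have "eval_tg (abs_tri_group (xw i @ xw j)) P = P"
    by (simp add: eval_tg_abs xw_def assms(3,4))
  then have "tri_dir A1 A2 A3 j * cnj m + m' = (1 - ?l) * P"
    unfolding rot by (simp add: aff_map_def algebra_simps)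
  then show ?thesis
    using rot by simp
qed

lemma eval_rot12: "eval_tg rot12 = aff_map False lam12 ((1 - lam12) * A3)"
proof -
  obtain m m' where "r 1 = aff_map True (tri_dir A1 A2 A3 1) m" "r 2 = aff_map True (tri_dir A1 A2 A3 2) m'"
    using tri_refl_aff_map by metis
  moreover have "r 1 A3 = A3" "r 2 A3 = A3"
    by (simp_all add: tri_refl_def refl_line_def)
  ultimately show ?thesis
    using eval_tg_rotation[of 1 _ 2 _ A3]
    by (simp add: rot12_def x1_def x2_def abs_tri_group_append tri_dir_def lam12_def)
qed

lemma eval_rot13: "eval_tg rot13 = aff_map False lam13 ((1 - lam13) * A2)"
proof -
  obtain m m' where "r 1 = aff_map True (tri_dir A1 A2 A3 1) m" "r 3 = aff_map True (tri_dir A1 A2 A3 3) m'"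
    using tri_refl_aff_map by metis
  moreover have "r 1 A2 = A2" "r 3 A2 = A2"
    by (simp_all add: tri_refl_def refl_line_def)
  ultimately show ?thesis
    using eval_tg_rotation[of 1 _ 3 _ A2]
    by (simp add: rot13_def x1_def x3_def abs_tri_group_append tri_dir_def lam13_def)
qed

definition w_shift :: complex where
  "w_shift = (1 - lam12) * (1 - lam13) * (A3 - A2) / lam12"

lemma eval_w_el: "eval_tg w_el = aff_map False 1 w_shift"
proof -
  have "eval_tg w_el = aff_map False (lam13 * (inverse lam12 * (inverse lam13 * lam12)))
     (lam13 * (inverse lam12 * (inverse lam13 * ((1 - lam12) * A3) + - ((1 - lam13) * A2) / lam13) + - ((1 - lam12) * A3) / lam12) + (1 - lam13) * A2)"
    unfolding w_el_eq_commutator eval_tg_add eval_rot12 eval_rot13 aff_map_comp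
      eval_tg_uminus[OF eval_rot12 lam_nonzero(1)] eval_tg_uminus[OF eval_rot13 lam_nonzero(2)]
    by simp
  moreover have "lam13 * (inverse lam12 * (inverse lam13 * lam12)) = 1"
    using lam_nonzero by (simp add: field_simps)
  moreover have "lam13 * (inverse lam12 * (inverse lam13 * ((1 - lam12) * A3) + - ((1 - lam13) * A2) / lam13)
      + - ((1 - lam12) * A3) / lam12) + (1 - lam13) * A2 = w_shift"
    using lam_nonzero by (simp add: w_shift_def field_simps)
  ultimately show ?thesis
    by simp
qed

lemma eval_g_el: "\<exists>M. eval_tg (g_el n m) = aff_map False (lam12 powi n * lam13 powi m) M"
proof -
  obtain a where "eval_tg (zpow rot12 n) = aff_map False (lam12 powi n) a"
    using eval_tg_zpow[OF eval_rot12 lam_nonzero(1)] by blast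
  moreover obtain b where "eval_tg (zpow rot13 m) = aff_map False (lam13 powi m) b"
    using eval_tg_zpow[OF eval_rot13 lam_nonzero(2)] by blast
  ultimately show ?thesis
    by (auto simp: g_el_def eval_tg_add aff_map_comp mult.commute)
qed

lemma eval_t_el: "eval_tg (t_el p q) = aff_map False 1 (lam12 powi p * lam13 powi q * w_shift)"
proof -
  define l where "l = lam12 powi p * lam13 powi q"
  obtain M where M: "eval_tg (g_el p q) = aff_map False l M"
    using eval_g_el unfolding l_def by blast
  have "l \<noteq> 0"
    using lam_nonzero by (simp add: l_def)
  have "eval_tg (t_el p q) = aff_map False (l * (1 * inverse l)) (l * (1 * (- M / l) + w_shift) + M)"
    unfolding t_el_def conjg_def eval_tg_add M eval_tg_uminus[OF M \<open>l \<noteq> 0\<close>] eval_w_el aff_map_comp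
    by simp
  also have "\<dots> = aff_map False 1 (l * w_shift)"
    using \<open>l \<noteq> 0\<close> by (simp add: field_simps)
  finally show ?thesis
    by (simp add: l_def)
qed

lemma eval_t_prod: "eval_tg (t_prod L) =
    aff_map False 1 (sum_list (map (\<lambda>k. of_int (t_sign k) * (lam12 powi fst (t_idx k) * lam13 powi snd (t_idx k)) * w_shift) L))"
proof (induction L)
  case Nil
  then show ?case
    by (simp add: eval_tg_zero aff_map_def fun_eq_iff)
next
  case (Cons k L)
  have "eval_tg (t_signed k) = aff_map False 1 (of_int (t_sign k) * (lam12 powi fst (t_idx k) * lam13 powi snd (t_idx k)) * w_shift)"
    by (cases "snd (snd k)")
       (simp_all add: t_signed_def eval_t_el eval_tg_uminus[OF eval_t_el] t_sign_def t_idx_def)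
  then show ?case
    by (simp add: t_prod_Cons eval_tg_add Cons aff_map_comp algebra_simps)
qed

lemma eval_tg_orientation_preserving_part:
  "\<exists>M. eval_tg (zpow rot12 n + zpow rot13 m + t_prod L) = aff_map False (lam12 powi n * lam13 powi m) M"
proof -
  obtain a where "eval_tg (zpow rot12 n) = aff_map False (lam12 powi n) a"
    using eval_tg_zpow[OF eval_rot12 lam_nonzero(1)] by blast
  moreover obtain b where "eval_tg (zpow rot13 m) = aff_map False (lam13 powi m) b"
    using eval_tg_zpow[OF eval_rot13 lam_nonzero(2)] by blast
  moreover obtain T where "eval_tg (t_prod L) = aff_map False 1 T"
    using eval_t_prod by blast
  ultimately show ?thesis
    by (auto simp: eval_tg_add aff_map_comp mult.commute)
qed

end

locale generic_tri = nondegenerate_tri +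
  assumes gen: "generic_triangle A1 A2 A3"
begin

lemma lam_independent: "laurent_independent lam12 lam13"
  using generic_triangle_laurent_independent[OF nd gen] by (simp add: lam12_def lam13_def)

lemma lam_powi_eq_1: "lam12 powi n * lam13 powi m = 1 \<Longrightarrow> n = 0 \<and> m = 0"
proof (rule ccontr)
  assume one: "lam12 powi n * lam13 powi m = 1" and nonzero: "\<not> (n = 0 \<and> m = 0)"
  define f where "f e = (if e = (n, m) then 1 else if e = (0, 0) then - 1 else 0 :: int)" for e
  have "(n, m) \<noteq> (0, 0)"
    using nonzero by simp
  then have "laurent_eval f {(n, m), (0, 0)} lam12 lam13 = 0"
    using one by (simp add: laurent_eval_def f_def)
  then show False
    using laurent_independentD[OF lam_independent, of "{(n, m), (0, 0)}" f "(n, m)"] by (simp add: f_def)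
qed

lemma w_shift_nonzero: "w_shift \<noteq> 0"
proof -
  have "lam12 \<noteq> 1" "lam13 \<noteq> 1"
    using lam_powi_eq_1[of 1 0] lam_powi_eq_1[of 0 1] by auto
  then show ?thesis
    using lam_nonzero nondegenerate_triangle_distinct[OF nd] by (simp add: w_shift_def)
qed

lemma t_prod_eval_id: "eval_tg (t_prod L) = id \<Longrightarrow> t_prod L = 0"
proof -
  assume "eval_tg (t_prod L) = id"
  then have "sum_list (map (\<lambda>k. of_int (t_sign k) * (lam12 powi fst (t_idx k) * lam13 powi snd (t_idx k)) * w_shift) L) = 0"
    unfolding eval_t_prod by (rule aff_map_False_eq_id[THEN conjunct2])
  then have "w_shift * laurent_eval (exp_sum L) (t_idx ` set L) lam12 lam13 = 0"
    using sum_list_t_sign_eq_exp_sum[of "\<lambda>e. lam12 powi fst e * lam13 powi snd e * w_shift" L]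
    by (simp add: laurent_eval_def sum_distrib_left mult_ac)
  then have "laurent_eval (exp_sum L) (t_idx ` set L) lam12 lam13 = 0"
    using w_shift_nonzero by simp
  then have "exp_sum L e = 0" if "e \<in> t_idx ` set L" for e
    using laurent_independentD[OF lam_independent _ _ that] by simp
  then have "\<forall>e. exp_sum L e = 0"
    using exp_sum_outside by blast
  then show "t_prod L = 0"
    by (rule t_prod_eq_0)
qed

lemma normal_form_eval_id: "eval_tg (normal_form s n m L) = id \<Longrightarrow> normal_form s n m L = 0"
proof -
  assume id: "eval_tg (normal_form s n m L) = id"
  obtain M where rest: "eval_tg (zpow rot12 n + zpow rot13 m + t_prod L) = aff_map False (lam12 powi n * lam13 powi m) M"
    using eval_tg_orientation_preserving_part by blast
  have "\<not> s"
  proof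
    assume s
    obtain m1 where "r 1 = aff_map True (tri_dir A1 A2 A3 1) m1"
      using tri_refl_aff_map by blast
    moreover have "eval_tg (normal_form s n m L) = eval_tg (zpow rot12 n + zpow rot13 m + t_prod L) \<circ> r 1"
      using \<open>s\<close> by (simp add: normal_form_def eval_tg_add eval_tg_generators add.assoc)
    ultimately show False
      using id unfolding rest by (simp add: aff_map_comp) (metis aff_map_True_neq_id)
  qed
  with id rest have "aff_map False (lam12 powi n * lam13 powi m) M = id"
    by (simp add: normal_form_def add.assoc)
  then have "lam12 powi n * lam13 powi m = 1"
    using aff_map_False_eq_id by blast
  then have "n = 0" "m = 0"
    using lam_powi_eq_1 by blast+
  with id \<open>\<not> s\<close> have "t_prod L = 0"
    by (intro t_prod_eval_id) (simp add: normal_form_def)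
  with \<open>\<not> s\<close> \<open>n = 0\<close> \<open>m = 0\<close> show ?thesis
    by (simp add: normal_form_def)
qed

lemma word_equiv_of_eval_word_id:
  assumes "set (map fst w) \<subseteq> {1, 2, 3}" and "eval_word r w = id"
  shows "word_equiv tri_relators w []"
proof -
  obtain s n m L where "abs_tri_group w = normal_form s n m L"
    using normal_form_exists[OF assms(1)] by blast
  then have "abs_tri_group w = 0"
    using normal_form_eval_id eval_tg_abs assms(2) by metis
  then show ?thesis
    using abs_tri_group_eq_0_iff by blast
qed

end

theorem theorem4p2:
  fixes A1 A2 A3 :: complex
  assumes "nondegenerate_triangle A1 A2 A3"
    and "generic_triangle A1 A2 A3"
  shows "presentation {1, 2, 3} (tri_refl A1 A2 A3) tri_relators"
proof -
  interpret generic_tri A1 A2 A3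
    using assms by unfold_locales
  show ?thesis
    unfolding presentation_def
    using word_equiv_of_eval_word_id eval_word_word_equiv by fastforce
qed

end
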